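(* Let $G$ be a connected block graph with center $C$, and let $d=\mathrm{diam}(G)\ge 2$. Then $\chi_{\mu_{d-1}}(G)=\chi_{\mu}(G)$ if and only if $\deg^\ast(C)\le \left\lceil \frac{d+1}{2}\right\rceil$.
   Context: A block of $G$ is a maximal connected subgraph without a cut-vertex; $G$ is a block graph if all its blocks are cliques. The eccentricity of $v$ is $\epsilon_G(v)=\max_u d_G(u,v)$, the radius $\mathrm{rad}(G)$ is the minimum eccentricity, and the center $C$ is the set of vertices of minimum eccentricity (in a block graph it induces a clique). A vertex $u$ is a radial vertex if $d_G(u,x)=\mathrm{rad}(G)$ for some $x\in C$. If $|C|\ge 2$, $\deg^\ast(C)$ is the number of components of $G-E(G[C])$ that contain a radial vertex; if $C=\{c\}$ and $F$ is the set of edges incident with $c$, $\deg^\ast(C)$ is the number of components of $G-F$ containing a radial vertex. A set $M\subseteq V(G)$ is a mutual-visibility set if for every $u,v\in M$ there is a shortest $u,v$-path none of whose internal vertices lies in $M$; it is a $k$-distance mutual-visibility set if moreover such a path can be chosen of length at most $k$. $\chi_\mu(G)$ (resp. $\chi_{\mu_k}(G)$) is the minimum cardinality of a partition of $V(G)$ into mutual-visibility sets (resp. $k$-distance mutual-visibility sets). *)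

theory Defs
  imports Complex_Main "HOL-Library.Disjoint_Sets"
begin

definition graph :: "'a set \<Rightarrow> 'a set set \<Rightarrow> bool" where
  "graph V E \<longleftrightarrow> finite V \<and> (\<forall>e\<in>E. \<exists>u v. e = {u, v} \<and> u \<noteq> v \<and> u \<in> V \<and> v \<in> V)"

definition walk_in :: "'a set \<Rightarrow> 'a set set \<Rightarrow> 'a list \<Rightarrow> bool" where
  "walk_in S E xs \<longleftrightarrow> xs \<noteq> [] \<and> set xs \<subseteq> S \<and>
     (\<forall>i. Suc i < length xs \<longrightarrow> {xs ! i, xs ! Suc i} \<in> E)"

definition walk_betw :: "'a set \<Rightarrow> 'a set set \<Rightarrow> 'a \<Rightarrow> 'a list \<Rightarrow> 'a \<Rightarrow> bool" where
  "walk_betw S E u xs v \<longleftrightarrow> walk_in S E xs \<and> hd xs = u \<and> last xs = v"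

text \<open>Connectedness of the subgraph induced by S (the empty set is vacuously connected).\<close>
definition connected_on :: "'a set \<Rightarrow> 'a set set \<Rightarrow> bool" where
  "connected_on S E \<longleftrightarrow> (\<forall>u\<in>S. \<forall>v\<in>S. \<exists>xs. walk_betw S E u xs v)"

definition connected_graph :: "'a set \<Rightarrow> 'a set set \<Rightarrow> bool" where
  "connected_graph V E \<longleftrightarrow> graph V E \<and> V \<noteq> {} \<and> connected_on V E"

definition nonseparable :: "'a set \<Rightarrow> 'a set set \<Rightarrow> bool" where
  "nonseparable B E \<longleftrightarrow> B \<noteq> {} \<and> connected_on B E \<and> (\<forall>x\<in>B. connected_on (B - {x}) E)"

text \<open>A block: vertex set of a maximal connected subgraph without a cut-vertex
  (such maximal subgraphs are induced).\<close>
definition is_block :: "'a set \<Rightarrow> 'a set set \<Rightarrow> 'a set \<Rightarrow> bool" where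
  "is_block V E B \<longleftrightarrow> B \<subseteq> V \<and> nonseparable B E \<and>
     (\<forall>B'. B \<subset> B' \<and> B' \<subseteq> V \<longrightarrow> \<not> nonseparable B' E)"

definition is_clique :: "'a set set \<Rightarrow> 'a set \<Rightarrow> bool" where
  "is_clique E B \<longleftrightarrow> (\<forall>u\<in>B. \<forall>v\<in>B. u \<noteq> v \<longrightarrow> {u, v} \<in> E)"

definition block_graph :: "'a set \<Rightarrow> 'a set set \<Rightarrow> bool" where
  "block_graph V E \<longleftrightarrow> graph V E \<and> (\<forall>B. is_block V E B \<longrightarrow> is_clique E B)"

definition dist :: "'a set \<Rightarrow> 'a set set \<Rightarrow> 'a \<Rightarrow> 'a \<Rightarrow> nat" where
  "dist V E u v = (LEAST n. \<exists>xs. walk_betw V E u xs v \<and> length xs = Suc n)"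

definition ecc :: "'a set \<Rightarrow> 'a set set \<Rightarrow> 'a \<Rightarrow> nat" where
  "ecc V E v = Max ((\<lambda>u. dist V E u v) ` V)"

definition rad :: "'a set \<Rightarrow> 'a set set \<Rightarrow> nat" where
  "rad V E = Min (ecc V E ` V)"

definition diam :: "'a set \<Rightarrow> 'a set set \<Rightarrow> nat" where
  "diam V E = Max (ecc V E ` V)"

definition center :: "'a set \<Rightarrow> 'a set set \<Rightarrow> 'a set" where
  "center V E = {v\<in>V. ecc V E v = rad V E}"

definition radial :: "'a set \<Rightarrow> 'a set set \<Rightarrow> 'a \<Rightarrow> bool" where
  "radial V E u \<longleftrightarrow> u \<in> V \<and> (\<exists>x\<in>center V E. dist V E u x = rad V E)"

definition components :: "'a set \<Rightarrow> 'a set set \<Rightarrow> 'a set set" where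
  "components V E' = (\<lambda>u. {v\<in>V. \<exists>xs. walk_betw V E' u xs v}) ` V"

definition deg_star_center :: "'a set \<Rightarrow> 'a set set \<Rightarrow> nat" where
  "deg_star_center V E =
     (let C = center V E;
          E' = (if card C \<ge> 2 then E - {e\<in>E. e \<subseteq> C}
                else E - {e\<in>E. \<exists>c\<in>C. c \<in> e})
      in card {K \<in> components V E'. \<exists>u\<in>K. radial V E u})"

definition shortest_path :: "'a set \<Rightarrow> 'a set set \<Rightarrow> 'a \<Rightarrow> 'a list \<Rightarrow> 'a \<Rightarrow> bool" where
  "shortest_path V E u xs v \<longleftrightarrow> walk_betw V E u xs v \<and> length xs = Suc (dist V E u v)"

definition internal :: "'a list \<Rightarrow> 'a set" where
  "internal xs = set (butlast (tl xs))"

definition mutual_visibility_set :: "'a set \<Rightarrow> 'a set set \<Rightarrow> 'a set \<Rightarrow> bool" where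
  "mutual_visibility_set V E M \<longleftrightarrow> M \<subseteq> V \<and>
     (\<forall>u\<in>M. \<forall>v\<in>M. \<exists>xs. shortest_path V E u xs v \<and> internal xs \<inter> M = {})"

definition k_dist_mutual_visibility_set :: "nat \<Rightarrow> 'a set \<Rightarrow> 'a set set \<Rightarrow> 'a set \<Rightarrow> bool" where
  "k_dist_mutual_visibility_set k V E M \<longleftrightarrow> M \<subseteq> V \<and>
     (\<forall>u\<in>M. \<forall>v\<in>M. \<exists>xs. shortest_path V E u xs v \<and> internal xs \<inter> M = {}
        \<and> length xs \<le> Suc k)"

definition chi_mu :: "'a set \<Rightarrow> 'a set set \<Rightarrow> nat" where
  "chi_mu V E = (LEAST n. \<exists>P. partition_on V P \<and> finite P \<and> card P = n \<and>
      (\<forall>M\<in>P. mutual_visibility_set V E M))"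

definition chi_mu_k :: "nat \<Rightarrow> 'a set \<Rightarrow> 'a set set \<Rightarrow> nat" where
  "chi_mu_k k V E = (LEAST n. \<exists>P. partition_on V P \<and> finite P \<and> card P = n \<and>
      (\<forall>M\<in>P. k_dist_mutual_visibility_set k V E M))"

end

theory Submission
  imports Defs "HOL-Combinatorics.Transposition"
begin

(* In a block graph every walk between the ends of a geodesic passes through all of its
   vertices (a detour would close a cycle, and blocks are cliques).  Consequently a
   mutual-visibility set meets a diametral path in at most two vertices, so
   chi_mu >= ceil((d + 1) / 2).  Conversely, colour each vertex by its distance to the
   center: for d = 2 rad the center is a single vertex c, for d = 2 rad - 1 it is a clique
   and each vertex is measured from its unique nearest central vertex, its gate.  Two
   vertices of equal colour see each other along a geodesic whose inner vertices are
   strictly closer to the center, which gives chi_mu = ceil((d + 1) / 2).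
   Two vertices are at distance d exactly when both are radial and lie in different
   branches at the center, i.e. in different components counted by deg*(C).  Such pairs
   must get different colours in a (d - 1)-distance partition, so deg*(C) bounds
   chi_mu_{d-1} from below; and if deg*(C) <= ceil((d + 1) / 2), permuting the colours
   inside each branch gives the radial vertices of different branches different colours
   without using more colours. *)

section \<open>Walks and components\<close>

lemma set_tl_subset: "set (tl xs) \<subseteq> set xs"
  by (cases xs) auto

lemma walk_in_iff_successively:
  "walk_in S E xs \<longleftrightarrow> xs \<noteq> [] \<and> set xs \<subseteq> S \<and> successively (\<lambda>x y. {x, y} \<in> E) xs"
  by (simp add: walk_in_def successively_conv_nth)

lemma walk_betw_nonempty: "walk_betw S E u xs v \<Longrightarrow> xs \<noteq> []"
  by (simp add: walk_betw_def walk_in_def)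

lemma walk_betw_set: "walk_betw S E u xs v \<Longrightarrow> set xs \<subseteq> S"
  by (simp add: walk_betw_def walk_in_def)

lemma walk_betw_ends_in_set:
  assumes "walk_betw S E u xs v" shows "u \<in> set xs" "v \<in> set xs"
  using assms walk_betw_nonempty[OF assms] by (auto simp: walk_betw_def)

lemma walk_betw_ends_in:
  assumes "walk_betw S E u xs v" shows "u \<in> S" "v \<in> S"
  using walk_betw_ends_in_set[OF assms] walk_betw_set[OF assms] by auto

lemma walk_betw_singleton: "x \<in> S \<Longrightarrow> walk_betw S E x [x] x"
  by (simp add: walk_betw_def walk_in_def)

lemma walk_betw_edge: "{u, v} \<in> E \<Longrightarrow> u \<in> S \<Longrightarrow> v \<in> S \<Longrightarrow> walk_betw S E u [u, v] v"
  by (simp add: walk_betw_def walk_in_def nth_Cons split: nat.splits)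

lemma walk_betw_append:
  assumes "walk_betw S E u xs w" "walk_betw S E w ys v"
  shows "walk_betw S E u (xs @ tl ys) v"
proof -
  obtain ys' where ys: "ys = w # ys'"
    using assms(2) by (cases ys) (auto simp: walk_betw_def walk_in_def)
  have "xs \<noteq> []" "last xs = w" using assms(1) by (auto simp: walk_betw_def walk_in_def)
  then show ?thesis
    using assms unfolding ys walk_betw_def walk_in_iff_successively
    by (auto simp: successively_append_iff successively_Cons)
qed

lemma walk_betw_rev: "walk_betw S E u xs v \<Longrightarrow> walk_betw S E v (rev xs) u"
  by (auto simp: walk_betw_def walk_in_iff_successively hd_rev last_rev insert_commute)

lemma walk_betw_mono_set: "walk_betw S E u xs v \<Longrightarrow> set xs \<subseteq> S' \<Longrightarrow> walk_betw S' E u xs v"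
  by (simp add: walk_betw_def walk_in_def)

lemma walk_betw_mono_edges:
  "walk_betw S E u xs v \<Longrightarrow> (\<And>i. Suc i < length xs \<Longrightarrow> {xs ! i, xs ! Suc i} \<in> E') \<Longrightarrow>
    walk_betw S E' u xs v"
  by (auto simp: walk_betw_def walk_in_def)

lemma walk_betw_subwalk:
  assumes "walk_betw S E u xs v" "i \<le> j" "j < length xs"
  shows "walk_betw S E (xs ! i) (take (Suc j - i) (drop i xs)) (xs ! j)"
proof -
  let ?ys = "take (Suc j - i) (drop i xs)"
  have "successively (\<lambda>x y. {x, y} \<in> E) xs" "set xs \<subseteq> S"
    using assms(1) by (auto simp: walk_betw_def walk_in_iff_successively)
  then have "successively (\<lambda>x y. {x, y} \<in> E) ?ys" "set ?ys \<subseteq> S"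
    by (metis append_take_drop_id successively_append_iff,
        meson in_set_dropD in_set_takeD subset_iff)
  moreover have "?ys \<noteq> []" "hd ?ys = xs ! i" "last ?ys = xs ! j"
    using assms(2,3) by (auto simp: hd_conv_nth last_conv_nth)
  ultimately show ?thesis by (simp add: walk_betw_def walk_in_iff_successively)
qed

lemma walk_betw_take:
  assumes "walk_betw S E u xs v" "i < length xs"
  shows "walk_betw S E u (take (Suc i) xs) (xs ! i)"
  using walk_betw_subwalk[OF assms(1) _ assms(2), of 0] assms
  by (simp add: walk_betw_def hd_conv_nth)

lemma walk_betw_drop:
  assumes "walk_betw S E u xs v" "i < length xs"
  shows "walk_betw S E (xs ! i) (drop i xs) v"
  using walk_betw_subwalk[OF assms(1), of i "length xs - 1"] assms walk_betw_nonempty[OF assms(1)]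
  by (simp add: walk_betw_def last_conv_nth)

lemma walk_betw_distinct:
  assumes "walk_betw S E u xs v"
  shows "\<exists>ys. walk_betw S E u ys v \<and> distinct ys \<and> set ys \<subseteq> set xs"
  using assms
proof (induction "length xs" arbitrary: xs rule: less_induct)
  case less
  show ?case
  proof (cases "distinct xs")
    case False
    then obtain i j where ij: "i < j" "j < length xs" "xs ! i = xs ! j"
      by (metis distinct_conv_nth linorder_neqE_nat order.strict_trans)
    have "walk_betw S E u (take (Suc i) xs) (xs ! j)" "walk_betw S E (xs ! j) (drop j xs) v"
      using walk_betw_take[OF less.prems, of i] walk_betw_drop[OF less.prems ij(2)] ij by auto
    from walk_betw_append[OF this] have "walk_betw S E u (take i xs @ drop j xs) v"
      using ij by (simp add: take_Suc_conv_app_nth Cons_nth_drop_Suc[symmetric])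
    moreover have "set (take i xs @ drop j xs) \<subseteq> set xs"
      using set_take_subset set_drop_subset by fastforce
    ultimately show ?thesis
      using less.hyps[of "take i xs @ drop j xs"] ij by fastforce
  qed (use less.prems in blast)
qed

lemma connected_on_if_walks_to:
  assumes "\<And>x. x \<in> T \<Longrightarrow> \<exists>xs. walk_betw T E x xs h"
  shows "connected_on T E"
  unfolding connected_on_def
  by (metis assms walk_betw_append walk_betw_rev)

lemma walk_betw_within_own_set: "walk_betw S E u xs v \<Longrightarrow> walk_betw (set xs) E u xs v"
  by (simp add: walk_betw_mono_set)

lemma distinct_nth_notin_set_take:
  "distinct ys \<Longrightarrow> i < j \<Longrightarrow> j < length ys \<Longrightarrow> ys ! j \<notin> set (take (Suc i) ys)"
  by (auto simp: in_set_conv_nth nth_eq_iff_index_eq)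

lemma distinct_nth_notin_set_drop:
  "distinct ys \<Longrightarrow> j < i \<Longrightarrow> i < length ys \<Longrightarrow> ys ! j \<notin> set (drop i ys)"
  by (auto simp: in_set_conv_nth nth_eq_iff_index_eq)

lemma walk_betw_to_apex_via_prefix:
  assumes ys: "walk_betw S E a ys c" and b: "{b, a} \<in> E" and i: "i < length ys"
  shows "walk_betw (insert b (set (take (Suc i) ys))) E (ys ! i) (rev (take (Suc i) ys) @ [b]) b"
proof -
  have "walk_betw (set (take (Suc i) ys)) E a (take (Suc i) ys) (ys ! i)"
    using walk_betw_within_own_set[OF walk_betw_take[OF ys i]] .
  then have "walk_betw (insert b (set (take (Suc i) ys))) E (ys ! i) (rev (take (Suc i) ys)) a"
    by (auto intro: walk_betw_mono_set dest: walk_betw_rev)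
  moreover have "walk_betw (insert b (set (take (Suc i) ys))) E a [a, b] b"
    using b walk_betw_ends_in_set[OF walk_betw_take[OF ys i]]
    by (intro walk_betw_edge) (auto simp: insert_commute)
  ultimately show ?thesis using walk_betw_append by fastforce
qed

lemma walk_betw_to_apex_via_suffix:
  assumes ys: "walk_betw S E a ys c" and b: "{c, b} \<in> E" and i: "i < length ys"
  shows "walk_betw (insert b (set (drop i ys))) E (ys ! i) (drop i ys @ [b]) b"
proof -
  have "walk_betw (insert b (set (drop i ys))) E (ys ! i) (drop i ys) c"
    using walk_betw_within_own_set[OF walk_betw_drop[OF ys i]] by (auto intro: walk_betw_mono_set)
  moreover have "walk_betw (insert b (set (drop i ys))) E c [c, b] b"
    using b walk_betw_ends_in_set[OF walk_betw_drop[OF ys i]] by (intro walk_betw_edge) auto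
  ultimately show ?thesis using walk_betw_append by fastforce
qed

lemma connected_on_cycle_minus_vertex:
  assumes ys: "walk_betw S E a ys c" "distinct ys"
    and b: "b \<notin> set ys" "{b, a} \<in> E" "{c, b} \<in> E" and x: "x \<in> set ys"
  shows "connected_on (insert b (set ys) - {x}) E"
proof (rule connected_on_if_walks_to[where h = b])
  obtain j where j: "j < length ys" "x = ys ! j" using x by (auto simp: in_set_conv_nth)
  fix z assume z: "z \<in> insert b (set ys) - {x}"
  show "\<exists>xs. walk_betw (insert b (set ys) - {x}) E z xs b"
  proof (cases "z = b")
    case False
    then obtain i where i: "i < length ys" "z = ys ! i" "i \<noteq> j"
      using z j by (auto simp: in_set_conv_nth)
    show ?thesis
    proof (cases "i < j")
      case True
      then have "insert b (set (take (Suc i) ys)) \<subseteq> insert b (set ys) - {x}"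
        using distinct_nth_notin_set_take[OF ys(2) True j(1)] j x b(1) set_take_subset by fastforce
      then show ?thesis
        using walk_betw_to_apex_via_prefix[OF ys(1) b(2) i(1)] i(2) walk_betw_set
        by (metis walk_betw_mono_set subset_trans)
    next
      case False
      then have "insert b (set (drop i ys)) \<subseteq> insert b (set ys) - {x}"
        using distinct_nth_notin_set_drop[OF ys(2) _ i(1), of j] i(3) j x b(1) set_drop_subset
        by fastforce
      then show ?thesis
        using walk_betw_to_apex_via_suffix[OF ys(1) b(3) i(1)] i(2) walk_betw_set
        by (metis walk_betw_mono_set subset_trans)
    qed
  qed (use x b(1) in \<open>auto intro: walk_betw_singleton\<close>)
qed

lemma nonseparable_cycle:
  assumes ys: "walk_betw S E a ys c" "distinct ys"
    and b: "b \<notin> set ys" "{b, a} \<in> E" "{c, b} \<in> E"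
  shows "nonseparable (insert b (set ys)) E"
proof -
  have "connected_on (insert b (set ys)) E"
  proof (rule connected_on_if_walks_to[where h = b])
    fix x assume "x \<in> insert b (set ys)"
    then show "\<exists>xs. walk_betw (insert b (set ys)) E x xs b"
    proof
      assume "x \<in> set ys"
      then obtain i where "i < length ys" "x = ys ! i" by (auto simp: in_set_conv_nth)
      moreover have "insert b (set (take (Suc i) ys)) \<subseteq> insert b (set ys)"
        using set_take_subset by fastforce
      ultimately show ?thesis
        using walk_betw_to_apex_via_prefix[OF ys(1) b(2)] walk_betw_set
        by (metis subset_trans walk_betw_mono_set)
    qed (auto intro: walk_betw_singleton)
  qed
  moreover have "connected_on (set ys) E"
  proof (rule connected_on_if_walks_to[where h = a])
    fix z assume "z \<in> set ys"
    then obtain i where "i < length ys" "z = ys ! i" by (auto simp: in_set_conv_nth)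
    then show "\<exists>xs. walk_betw (set ys) E z xs a"
      using walk_betw_rev[OF walk_betw_take[OF ys(1)]] set_take_subset
      by (metis set_rev walk_betw_mono_set)
  qed
  then have "connected_on (insert b (set ys) - {b}) E" using b(1) by simp
  ultimately show ?thesis
    using connected_on_cycle_minus_vertex[OF ys b] by (auto simp: nonseparable_def)
qed

lemma in_internal_iff:
  "z \<in> internal xs \<longleftrightarrow> (\<exists>p. 0 < p \<and> Suc p < length xs \<and> xs ! p = z)"
proof
  assume "z \<in> internal xs"
  then obtain q where "q < length (butlast (tl xs))" "butlast (tl xs) ! q = z"
    unfolding internal_def by (auto simp: in_set_conv_nth)
  then show "\<exists>p. 0 < p \<and> Suc p < length xs \<and> xs ! p = z"
    by (intro exI[of _ "Suc q"]) (auto simp: nth_butlast nth_tl)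
next
  assume "\<exists>p. 0 < p \<and> Suc p < length xs \<and> xs ! p = z"
  then obtain p where "0 < p" "Suc p < length xs" "xs ! p = z" by blast
  then have "butlast (tl xs) ! (p - 1) = z" "p - 1 < length (butlast (tl xs))"
    by (auto simp: nth_butlast nth_tl)
  then show "z \<in> internal xs" unfolding internal_def by (metis nth_mem)
qed

lemma internal_rev [simp]: "internal (rev xs) = internal xs"
proof -
  have "tl (rev xs) = rev (butlast xs)" by (metis butlast_rev rev_rev_ident)
  then show ?thesis unfolding internal_def by (simp add: butlast_rev butlast_tl)
qed

definition reachable :: "'a set \<Rightarrow> 'a set set \<Rightarrow> 'a \<Rightarrow> 'a \<Rightarrow> bool" where
  "reachable S E u v \<longleftrightarrow> (\<exists>xs. walk_betw S E u xs v)"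

definition component_of :: "'a set \<Rightarrow> 'a set set \<Rightarrow> 'a \<Rightarrow> 'a set" where
  "component_of S E u = {v \<in> S. reachable S E u v}"

lemma components_eq_image_component_of: "components S E = component_of S E ` S"
  by (simp add: components_def component_of_def reachable_def)

lemma reachable_refl: "u \<in> S \<Longrightarrow> reachable S E u u"
  unfolding reachable_def by (rule exI, rule walk_betw_singleton)

lemma reachable_sym: "reachable S E u v \<Longrightarrow> reachable S E v u"
  unfolding reachable_def by (metis walk_betw_rev)

lemma reachable_trans: "reachable S E u v \<Longrightarrow> reachable S E v w \<Longrightarrow> reachable S E u w"
  unfolding reachable_def by (metis walk_betw_append)

lemma in_component_of_self: "u \<in> S \<Longrightarrow> u \<in> component_of S E u"
  by (simp add: component_of_def reachable_refl)

lemma component_of_eq_iff: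
  assumes "u \<in> S"
  shows "component_of S E u = component_of S E w \<longleftrightarrow> reachable S E u w"
proof
  assume "component_of S E u = component_of S E w"
  then have "u \<in> component_of S E w" using in_component_of_self[OF assms, of E] by simp
  then show "reachable S E u w" by (simp add: component_of_def reachable_sym)
next
  assume uw: "reachable S E u w"
  have "reachable S E u x \<longleftrightarrow> reachable S E w x" for x
    using reachable_trans[OF uw, of x] reachable_trans[OF reachable_sym[OF uw], of x] by auto
  then show "component_of S E u = component_of S E w" by (simp add: component_of_def)
qed

lemma components_meeting:
  "{K \<in> components S E. \<exists>u\<in>K. P u} = component_of S E ` {u \<in> S. P u}"
proof (intro equalityI subsetI)
  fix K assume "K \<in> {K \<in> components S E. \<exists>u\<in>K. P u}"
  then obtain x u where x: "x \<in> S" "K = component_of S E x" and u: "u \<in> K" "P u"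
    unfolding components_eq_image_component_of by auto
  then have "u \<in> S" "reachable S E x u"
    unfolding component_of_def by simp_all
  then have "K = component_of S E u"
    using x component_of_eq_iff[OF x(1)] by simp
  then show "K \<in> component_of S E ` {u \<in> S. P u}"
    using u \<open>u \<in> S\<close> by simp
next
  fix K assume "K \<in> component_of S E ` {u \<in> S. P u}"
  then obtain u where "u \<in> S" "P u" "K = component_of S E u" by auto
  then show "K \<in> {K \<in> components S E. \<exists>u\<in>K. P u}"
    unfolding components_eq_image_component_of using in_component_of_self[of u S E] by auto
qed

lemma finite_injective_labelling:
  assumes "finite X" "card X \<le> Suc n"
  obtains h :: "'b \<Rightarrow> nat" where "inj_on h X" "\<And>x. h x \<le> n" "\<And>x. x \<notin> X \<Longrightarrow> h x = n"
proof -
  obtain f where f: "f ` X \<subseteq> {..n}" "inj_on f X" using card_le_inj[of X "{..n}"] assms by auto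
  show ?thesis
    by (rule that[of "\<lambda>x. if x \<in> X then f x else n"]) (use f in \<open>auto simp: inj_on_def\<close>)
qed

section \<open>Distances and geodesics\<close>

locale connected_simple_graph =
  fixes V :: "'a set" and E :: "'a set set"
  assumes connected: "connected_graph V E"
begin

abbreviation d :: "'a \<Rightarrow> 'a \<Rightarrow> nat" where "d \<equiv> Defs.dist V E"
abbreviation geodesic :: "'a \<Rightarrow> 'a list \<Rightarrow> 'a \<Rightarrow> bool" where "geodesic \<equiv> shortest_path V E"
abbreviation "D \<equiv> diam V E"
abbreviation "r \<equiv> rad V E"
abbreviation "C \<equiv> center V E"

lemma finite_V: "finite V"
  using connected by (simp add: connected_graph_def graph_def)

lemma V_nonempty: "V \<noteq> {}"
  using connected by (simp add: connected_graph_def)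

lemma edge_ends:
  assumes "{u, v} \<in> E" shows "u \<noteq> v" "u \<in> V" "v \<in> V"
proof -
  obtain a b where "{u, v} = {a, b}" "a \<noteq> b" "a \<in> V" "b \<in> V"
    using connected assms unfolding connected_graph_def graph_def by blast
  then show "u \<noteq> v" "u \<in> V" "v \<in> V" by (auto simp: doubleton_eq_iff)
qed

lemma walk_exists: "u \<in> V \<Longrightarrow> v \<in> V \<Longrightarrow> \<exists>xs. walk_betw V E u xs v"
  using connected by (simp add: connected_graph_def connected_on_def)

lemma dist_less_length:
  assumes "walk_betw V E u xs v" shows "d u v < length xs"
proof -
  have "length xs = Suc (length xs - 1)" using walk_betw_nonempty[OF assms] by simp
  then have "d u v \<le> length xs - 1"
    unfolding dist_def using assms by (intro Least_le) blast
  then show ?thesis using walk_betw_nonempty[OF assms] by (cases xs) auto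
qed

lemma geodesic_exists:
  assumes "u \<in> V" "v \<in> V" shows "\<exists>xs. geodesic u xs v"
proof -
  obtain xs where xs: "walk_betw V E u xs v" using walk_exists assms by blast
  have "length xs = Suc (length xs - 1)" using walk_betw_nonempty[OF xs] by simp
  then have "\<exists>n xs. walk_betw V E u xs v \<and> length xs = Suc n" using xs by blast
  from LeastI_ex[OF this] show ?thesis by (simp add: shortest_path_def dist_def)
qed

lemma geodesic_walk: "geodesic u xs v \<Longrightarrow> walk_betw V E u xs v"
  by (simp add: shortest_path_def)

lemma geodesic_length: "geodesic u xs v \<Longrightarrow> length xs = Suc (d u v)"
  by (simp add: shortest_path_def)

lemma geodesic_set: "geodesic u xs v \<Longrightarrow> set xs \<subseteq> V"
  by (rule walk_betw_set[OF geodesic_walk])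

lemma geodesic_ends_in: "geodesic u xs v \<Longrightarrow> u \<in> V \<and> v \<in> V"
  using walk_betw_ends_in[OF geodesic_walk] by simp

lemma geodesic_nth_in: "geodesic u xs v \<Longrightarrow> i \<le> d u v \<Longrightarrow> xs ! i \<in> V"
  using geodesic_length geodesic_set by (metis le_imp_less_Suc nth_mem subsetD)

lemma geodesic_first:
  assumes "geodesic u xs v" shows "xs ! 0 = u"
proof -
  have "xs \<noteq> []" "hd xs = u" using geodesic_walk[OF assms] by (auto simp: walk_betw_def walk_in_def)
  then show ?thesis by (simp add: hd_conv_nth)
qed

lemma geodesic_last:
  assumes "geodesic u xs v" shows "xs ! d u v = v"
proof -
  have "xs \<noteq> []" "last xs = v" using geodesic_walk[OF assms] by (auto simp: walk_betw_def walk_in_def)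
  then show ?thesis using geodesic_length[OF assms] by (simp add: last_conv_nth)
qed

text \<open>Outside \<open>V\<close> there are no walks and \<open>Defs.dist\<close> is an unspecified \<open>LEAST\<close>.\<close>

lemma dist_self [simp]: "u \<in> V \<Longrightarrow> d u u = 0"
  using dist_less_length[OF walk_betw_singleton] by fastforce

lemma geodesic_singleton: "v \<in> V \<Longrightarrow> geodesic v [v] v"
  by (simp add: shortest_path_def walk_betw_singleton)

lemma dist_commute:
  assumes "u \<in> V" "v \<in> V" shows "d u v = d v u"
proof -
  have "d v u \<le> d u v" if uv: "u \<in> V" "v \<in> V" for u v
  proof -
    obtain xs where xs: "geodesic u xs v" using geodesic_exists uv by blast
    have "d v u < length (rev xs)"
      using dist_less_length[OF walk_betw_rev[OF geodesic_walk[OF xs]]] .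
    then show ?thesis using geodesic_length[OF xs] by simp
  qed
  then show ?thesis using assms by (meson antisym)
qed

lemma dist_triangle:
  assumes "u \<in> V" "v \<in> V" "w \<in> V" shows "d u v \<le> d u w + d w v"
proof -
  obtain xs ys where xs: "geodesic u xs w" and ys: "geodesic w ys v"
    using geodesic_exists assms by blast
  have "d u v < length (xs @ tl ys)"
    using dist_less_length[OF walk_betw_append[OF geodesic_walk[OF xs] geodesic_walk[OF ys]]] .
  then show ?thesis using geodesic_length[OF xs] geodesic_length[OF ys] by simp
qed

lemma dist_eq_0_iff:
  assumes "u \<in> V" "v \<in> V" shows "d u v = 0 \<longleftrightarrow> u = v"
proof
  assume "d u v = 0"
  moreover obtain xs where "geodesic u xs v" using geodesic_exists assms by blast
  ultimately show "u = v" using geodesic_first geodesic_last by fastforce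
qed (use assms in simp)

lemma dist_edge:
  assumes "{u, v} \<in> E" shows "d u v = 1"
proof -
  have "u \<noteq> v" "u \<in> V" "v \<in> V" using edge_ends assms by auto
  moreover from this have "d u v < 2"
    using dist_less_length[OF walk_betw_edge[OF assms]] by simp
  ultimately show ?thesis using dist_eq_0_iff by fastforce
qed

lemma edge_if_dist_1:
  assumes "u \<in> V" "v \<in> V" "d u v = 1" shows "{u, v} \<in> E"
proof -
  obtain xs where xs: "geodesic u xs v" using geodesic_exists assms by blast
  then have "length xs = 2" using geodesic_length assms(3) by simp
  then have "{xs ! 0, xs ! 1} \<in> E"
    using geodesic_walk[OF xs] by (simp add: walk_betw_def walk_in_def)
  then show ?thesis using geodesic_first[OF xs] geodesic_last[OF xs] assms(3) by simp
qed

lemma dist_le_1_cases: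
  "u \<in> V \<Longrightarrow> v \<in> V \<Longrightarrow> d u v \<le> 1 \<Longrightarrow> u = v \<or> {u, v} \<in> E"
  using dist_eq_0_iff edge_if_dist_1 by (metis le_neq_implies_less less_one)

lemma dist_edge_lipschitz:
  assumes "{u, v} \<in> E" "x \<in> V" shows "d x u \<le> d x v + 1" "d x v \<le> d x u + 1"
  using dist_triangle[of x u v] dist_triangle[of x v u] dist_edge[OF assms(1)] edge_ends[OF assms(1)]
    assms(2) dist_commute[of u v] by auto

lemma geodesic_subpath:
  assumes xs: "geodesic u xs v" and ij: "i \<le> j" "j \<le> d u v"
  shows "geodesic (xs ! i) (take (Suc j - i) (drop i xs)) (xs ! j)"
    and "d (xs ! i) (xs ! j) = j - i"
proof -
  let ?ys = "take (Suc j - i) (drop i xs)"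
  have n: "length xs = Suc (d u v)" using geodesic_length[OF xs] .
  have w: "walk_betw V E u xs v" using geodesic_walk[OF xs] .
  have wy: "walk_betw V E (xs ! i) ?ys (xs ! j)" using walk_betw_subwalk[OF w ij(1)] ij n by simp
  have in_V: "xs ! i \<in> V" "xs ! j \<in> V" "u \<in> V" "v \<in> V"
    using geodesic_nth_in[OF xs] geodesic_ends_in[OF xs] ij by auto
  have "d u (xs ! i) < Suc i"
    using dist_less_length[OF walk_betw_take[OF w, of i]] ij n by simp
  moreover have "d (xs ! j) v < length xs - j"
    using dist_less_length[OF walk_betw_drop[OF w, of j]] ij n by simp
  moreover have "d (xs ! i) (xs ! j) < Suc (j - i)"
    using dist_less_length[OF wy] ij n by simp
  moreover have "d u v \<le> d u (xs ! i) + d (xs ! i) (xs ! j) + d (xs ! j) v"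
    using dist_triangle[of u v "xs ! i"] dist_triangle[of "xs ! i" v "xs ! j"] in_V by simp
  ultimately show dist: "d (xs ! i) (xs ! j) = j - i" using ij n by linarith
  show "geodesic (xs ! i) ?ys (xs ! j)"
    using wy ij n dist by (simp add: shortest_path_def)
qed

lemma dist_geodesic_nth:
  assumes "geodesic u xs v" "i \<le> d u v" shows "d u (xs ! i) = i"
  using geodesic_subpath(2)[OF assms(1) _ assms(2), of 0] geodesic_first[OF assms(1)] by simp

lemma dist_geodesic_nth_last:
  assumes "geodesic u xs v" "i \<le> d u v" shows "d (xs ! i) v = d u v - i"
  using geodesic_subpath(2)[OF assms(1) assms(2) le_refl] geodesic_last[OF assms(1)] by simp

lemma geodesic_distinct:
  assumes xs: "geodesic u xs v" shows "distinct xs"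
proof -
  have "xs ! i \<noteq> xs ! j" if "i < j" "j < length xs" for i j
    using geodesic_subpath(2)[OF xs, of i j] geodesic_nth_in[OF xs, of j] that geodesic_length[OF xs]
    by auto
  then show ?thesis unfolding distinct_conv_nth by (metis linorder_neqE_nat)
qed

lemma geodesic_append:
  assumes "geodesic u xs w" "geodesic w ys v" "d u w + d w v = d u v"
  shows "geodesic u (xs @ tl ys) v"
  using walk_betw_append[OF geodesic_walk[OF assms(1)] geodesic_walk[OF assms(2)]]
    geodesic_length[OF assms(1)] geodesic_length[OF assms(2)] assms(3)
  by (simp add: shortest_path_def)

lemma geodesic_rev:
  assumes "geodesic u xs v" shows "geodesic v (rev xs) u"
  using walk_betw_rev[OF geodesic_walk[OF assms]] geodesic_length[OF assms]
    dist_commute geodesic_ends_in[OF assms]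
  by (simp add: shortest_path_def)

lemma internal_geodesic:
  assumes g: "geodesic u g v" and z: "z \<in> internal g"
  shows "z \<in> set g" "z \<noteq> u" "z \<noteq> v"
proof -
  obtain p where p: "0 < p" "Suc p < length g" "g ! p = z"
    using z unfolding in_internal_iff by blast
  show "z \<in> set g" using p by auto
  have "p < length g" "0 < length g" "d u v < length g" "p \<noteq> 0" "p \<noteq> d u v"
    using p geodesic_length[OF g] by auto
  then have "g ! p \<noteq> g ! 0" "g ! p \<noteq> g ! d u v"
    using nth_eq_iff_index_eq[OF geodesic_distinct[OF g]] by blast+
  then show "z \<noteq> u" "z \<noteq> v" using p(3) geodesic_first[OF g] geodesic_last[OF g] by auto
qed

lemma dist_le_ecc: "u \<in> V \<Longrightarrow> d u v \<le> ecc V E v"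
  unfolding ecc_def using finite_V by (intro Max_ge) auto

lemma ecc_attained: "\<exists>u\<in>V. d u v = ecc V E v"
proof -
  have "ecc V E v \<in> (\<lambda>u. d u v) ` V"
    unfolding ecc_def using finite_V V_nonempty by (intro Max_in) auto
  then show ?thesis by auto
qed

lemma ecc_le: "(\<And>u. u \<in> V \<Longrightarrow> d u v \<le> m) \<Longrightarrow> ecc V E v \<le> m"
  unfolding ecc_def using finite_V V_nonempty by (subst Max_le_iff) auto

lemma rad_le_ecc: "v \<in> V \<Longrightarrow> r \<le> ecc V E v"
  unfolding rad_def using finite_V by (intro Min_le) auto

lemma ecc_le_diam: "v \<in> V \<Longrightarrow> ecc V E v \<le> D"
  unfolding diam_def using finite_V by (intro Max_ge) auto

lemma dist_le_diam: "u \<in> V \<Longrightarrow> v \<in> V \<Longrightarrow> d u v \<le> D"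
  using dist_le_ecc ecc_le_diam le_trans by blast

lemma center_iff: "c \<in> C \<longleftrightarrow> c \<in> V \<and> ecc V E c = r"
  by (simp add: center_def)

lemma dist_le_rad_if_center: "c \<in> C \<Longrightarrow> u \<in> V \<Longrightarrow> d u c \<le> r \<and> d c u \<le> r"
  using dist_le_ecc center_iff dist_commute by metis

lemma diametral_geodesic_exists: "\<exists>u v xs. geodesic u xs v \<and> d u v = D"
proof -
  have "D \<in> ecc V E ` V"
    unfolding diam_def using finite_V V_nonempty by (intro Max_in) auto
  then obtain u v where "u \<in> V" "v \<in> V" "d u v = D" using ecc_attained by force
  then show ?thesis using geodesic_exists by blast
qed

lemma diam_le_twice_rad: "D \<le> 2 * r"
proof -
  obtain u v xs where xs: "geodesic u xs v" "d u v = D" using diametral_geodesic_exists by blast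
  have "r \<in> ecc V E ` V"
    unfolding rad_def using finite_V V_nonempty by (intro Min_in) auto
  then obtain c where c: "c \<in> C" by (auto simp: center_iff)
  have "u \<in> V" "v \<in> V" "c \<in> V" using geodesic_ends_in[OF xs(1)] c center_iff by auto
  then have "d u v \<le> d u c + d c v" by (rule dist_triangle)
  moreover have "d u c \<le> r" "d c v \<le> r"
    using dist_le_rad_if_center[OF c] \<open>u \<in> V\<close> \<open>v \<in> V\<close> by auto
  ultimately show ?thesis using xs(2) by simp
qed

lemma k_dist_mutual_visibility_set_imp:
  "k_dist_mutual_visibility_set k V E M \<Longrightarrow> mutual_visibility_set V E M"
  unfolding k_dist_mutual_visibility_set_def mutual_visibility_set_def by blast

lemma k_dist_partition_exists:
  "\<exists>P. partition_on V P \<and> finite P \<and> (\<forall>M\<in>P. k_dist_mutual_visibility_set k V E M)"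
proof (intro exI conjI)
  show "partition_on V ((\<lambda>v. {v}) ` V)" "finite ((\<lambda>v. {v}) ` V)"
    using finite_V by (auto simp: partition_on_def disjoint_def)
  show "\<forall>M\<in>(\<lambda>v. {v}) ` V. k_dist_mutual_visibility_set k V E M"
    using geodesic_singleton by (fastforce simp: k_dist_mutual_visibility_set_def internal_def)
qed

lemma chi_mu_k_attained:
  "\<exists>P. partition_on V P \<and> finite P \<and> card P = chi_mu_k k V E \<and>
     (\<forall>M\<in>P. k_dist_mutual_visibility_set k V E M)"
  unfolding chi_mu_k_def by (rule LeastI_ex) (use k_dist_partition_exists in blast)

lemma chi_mu_attained:
  "\<exists>P. partition_on V P \<and> finite P \<and> card P = chi_mu V E \<and>
     (\<forall>M\<in>P. mutual_visibility_set V E M)"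
  unfolding chi_mu_def
  by (rule LeastI_ex) (use k_dist_partition_exists k_dist_mutual_visibility_set_imp in blast)

lemma chi_mu_le_chi_mu_k: "chi_mu V E \<le> chi_mu_k k V E"
proof -
  obtain P where "partition_on V P" "finite P" "card P = chi_mu_k k V E"
    "\<forall>M\<in>P. k_dist_mutual_visibility_set k V E M"
    using chi_mu_k_attained by blast
  then show ?thesis
    unfolding chi_mu_def using k_dist_mutual_visibility_set_imp by (intro Least_le) auto
qed

lemma chi_mu_k_le_coloring:
  assumes colors: "\<And>v. v \<in> V \<Longrightarrow> \<kappa> v < n"
    and visible: "\<And>u w. u \<in> V \<Longrightarrow> w \<in> V \<Longrightarrow> \<kappa> u = \<kappa> w \<Longrightarrow>
      \<exists>xs. geodesic u xs w \<and> (\<forall>z\<in>internal xs. \<kappa> z \<noteq> \<kappa> u) \<and> length xs \<le> Suc k"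
  shows "chi_mu_k k V E \<le> n"
proof -
  let ?P = "(\<lambda>i. {v \<in> V. \<kappa> v = i}) ` {..<n} - {{}}"
  have "partition_on V ?P"
    using colors by (auto simp: partition_on_def disjoint_def)
  moreover have "k_dist_mutual_visibility_set k V E M" if "M \<in> ?P" for M
  proof -
    obtain i where M: "M = {v \<in> V. \<kappa> v = i}" using \<open>M \<in> ?P\<close> by blast
    have "\<exists>xs. geodesic u xs w \<and> internal xs \<inter> M = {} \<and> length xs \<le> Suc k"
      if "u \<in> M" "w \<in> M" for u w
      using visible[of u w] that M by fastforce
    then show ?thesis using M by (simp add: k_dist_mutual_visibility_set_def)
  qed
  moreover have "card ?P \<le> n"
    by (metis card_Diff1_le card_image_le card_lessThan finite_imageI finite_lessThan le_trans)
  ultimately show ?thesis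
    unfolding chi_mu_k_def by (intro le_trans[OF Least_le]) auto
qed

lemma card_image_le_chi_mu_k:
  assumes R: "R \<subseteq> V"
    and far: "\<And>u w. u \<in> R \<Longrightarrow> w \<in> R \<Longrightarrow> \<beta> u \<noteq> \<beta> w \<Longrightarrow> k < d u w"
  shows "card (\<beta> ` R) \<le> chi_mu_k k V E"
proof -
  obtain P where P: "partition_on V P" "finite P" "card P = chi_mu_k k V E"
    "\<forall>M\<in>P. k_dist_mutual_visibility_set k V E M"
    using chi_mu_k_attained by blast
  have "\<beta> u \<in> (\<lambda>M. \<beta> (SOME w. w \<in> M \<inter> R)) ` P" if u: "u \<in> R" for u
  proof -
    obtain M where M: "M \<in> P" "u \<in> M" using P(1) R u unfolding partition_on_def by blast
    define w where "w = (SOME w. w \<in> M \<inter> R)"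
    have w: "w \<in> M \<inter> R" unfolding w_def using M u by (intro someI) blast
    then obtain xs where "geodesic u xs w" "length xs \<le> Suc k"
      using P(4) M unfolding k_dist_mutual_visibility_set_def by blast
    then have "\<beta> u = \<beta> w" using far[OF u, of w] w geodesic_length by fastforce
    then show ?thesis using M(1) unfolding w_def by blast
  qed
  then have "card (\<beta> ` R) \<le> card ((\<lambda>M. \<beta> (SOME w. w \<in> M \<inter> R)) ` P)"
    using P(2) by (intro card_mono) auto
  also have "\<dots> \<le> card P" using P(2) by (rule card_image_le)
  finally show ?thesis using P(3) by simp
qed

end

section \<open>Block graphs\<close>

lemma no_interior_max_bound:
  fixes f :: "nat \<Rightarrow> nat"
  assumes step: "\<And>j. j < k \<Longrightarrow> f (Suc j) \<le> f j + 1 \<and> f j \<le> f (Suc j) + 1"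
    and no_max: "\<And>j. 0 < j \<Longrightarrow> j < k \<Longrightarrow> f j < max (f (j - 1)) (f (Suc j))"
    and "a \<le> k"
  shows "f a \<le> max (f 0 - a) (f k - (k - a))"
proof (cases "\<exists>i<a. f i \<le> f (Suc i)")
  case True
  then obtain i where i: "i < a" "f i \<le> f (Suc i)" by blast
  have up: "f (Suc m) = f m + 1" if "i < m" "m < k" for m
    using that
  proof (induction m)
    case (Suc m)
    then have "f (Suc m) < max (f m) (f (Suc (Suc m)))" using no_max[of "Suc m"] by simp
    moreover have "f m \<le> f (Suc m)" using Suc i by (cases "i = m") auto
    ultimately have "f (Suc m) < f (Suc (Suc m))" by (auto simp: less_max_iff_disj)
    then show ?case using step[of "Suc m"] Suc.prems by simp
  qed simp
  have "f (a + n) = f a + n" if "a + n \<le> k" for n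
    using that up i(1) by (induction n) auto
  from this[of "k - a"] show ?thesis using \<open>a \<le> k\<close> by simp
next
  case False
  have "f 0 = f b + b" if "b \<le> a" for b
    using that
  proof (induction b)
    case (Suc b)
    then have "f (Suc b) < f b" "f b \<le> f (Suc b) + 1"
      using False step[of b] \<open>a \<le> k\<close> by (auto simp: not_le)
    then show ?case using Suc by simp
  qed simp
  from this[of a] show ?thesis by simp
qed

locale connected_block_graph = connected_simple_graph +
  assumes block: "block_graph V E"
begin

lemma block_containing:
  assumes "nonseparable S E" "S \<subseteq> V"
  shows "\<exists>B. is_block V E B \<and> S \<subseteq> B"
proof -
  let ?A = "{B. S \<subseteq> B \<and> B \<subseteq> V \<and> nonseparable B E}"
  have "finite ?A" using finite_V by (auto intro: finite_subset[of _ "Pow V"])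
  moreover have "?A \<noteq> {}" using assms by blast
  ultimately obtain B where B: "B \<in> ?A" "\<forall>B'\<in>?A. B \<subseteq> B' \<longrightarrow> B = B'"
    by (elim finite_has_maximal[THEN bexE])
  then have "is_block V E B" unfolding is_block_def by (metis (no_types, lifting) mem_Collect_eq order.trans psubset_imp_subset psubset_eq)
  then show ?thesis using B by blast
qed

text \<open>The detour closes a cycle through \<open>a\<close>, \<open>b\<close>, \<open>c\<close>; it lies in a block, which is a clique.\<close>

lemma edge_of_detour:
  assumes ab: "{a, b} \<in> E" and bc: "{b, c} \<in> E" and ac: "a \<noteq> c"
    and w: "walk_betw (V - {b}) E a xs c"
  shows "{a, c} \<in> E"
proof -
  obtain ys where ys: "walk_betw (V - {b}) E a ys c" "distinct ys"
    using walk_betw_distinct[OF w] by blast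
  have "b \<notin> set ys" "set ys \<subseteq> V" using walk_betw_set[OF ys(1)] by auto
  then have "nonseparable (insert b (set ys)) E" "insert b (set ys) \<subseteq> V"
    using nonseparable_cycle[OF ys] ab bc edge_ends[OF ab] by (auto simp: insert_commute)
  then obtain B where "is_block V E B" "insert b (set ys) \<subseteq> B"
    using block_containing by blast
  moreover have "a \<in> set ys" "c \<in> set ys" using walk_betw_ends_in_set[OF ys(1)] by auto
  ultimately show ?thesis using block ac by (auto simp: block_graph_def is_clique_def)
qed

lemma edge_on_geodesic:
  assumes "geodesic u g w" "i < d u w" shows "{g ! i, g ! Suc i} \<in> E"
  using geodesic_walk[OF assms(1)] geodesic_length[OF assms(1)] assms(2)
  by (simp add: walk_betw_def walk_in_def)

lemma detour_around_geodesic_vertex: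
  assumes g: "geodesic u g w" and p: "0 < p" "p < d u w"
    and xs: "walk_betw V E u xs w" "g ! p \<notin> set xs"
  shows "walk_betw (V - {g ! p}) E (g ! (p - 1)) (rev (take p g) @ tl (xs @ tl (rev (drop (Suc p) g))))
    (g ! Suc p)"
proof -
  have gw: "walk_betw V E u g w" using geodesic_walk[OF g] .
  have "walk_betw V E (g ! (p - 1)) (rev (take p g)) u"
    using walk_betw_rev[OF walk_betw_take[OF gw, of "p - 1"]] p geodesic_length[OF g] by simp
  moreover have "walk_betw V E w (rev (drop (Suc p) g)) (g ! Suc p)"
    using walk_betw_rev[OF walk_betw_drop[OF gw, of "Suc p"]] p geodesic_length[OF g] by simp
  ultimately have W: "walk_betw V E (g ! (p - 1))
      (rev (take p g) @ tl (xs @ tl (rev (drop (Suc p) g)))) (g ! Suc p)"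
    using walk_betw_append xs(1) by metis
  have "g ! p \<notin> set (take p g)" "g ! p \<notin> set (drop (Suc p) g)"
    using distinct_nth_notin_set_take[OF geodesic_distinct[OF g], of "p - 1" p]
      distinct_nth_notin_set_drop[OF geodesic_distinct[OF g], of p "Suc p"]
      p geodesic_length[OF g] by auto
  then have "g ! p \<notin> set (rev (take p g) @ tl (xs @ tl (rev (drop (Suc p) g))))"
    using xs(2) set_tl_subset[of "xs @ tl (rev (drop (Suc p) g))"]
      set_tl_subset[of "rev (drop (Suc p) g)"] by auto
  then show ?thesis using walk_betw_set[OF W] by (blast intro: walk_betw_mono_set[OF W])
qed

text \<open>Otherwise the two neighbours of \<open>c\<close> on a geodesic through \<open>c\<close>, which are at distance 2,
  would be joined by a detour around \<open>c\<close>.\<close>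

lemma geodesic_vertex_on_walk:
  assumes between: "d u c + d c w = d u w" and c: "c \<in> V" "c \<noteq> u" "c \<noteq> w"
    and xs: "walk_betw V E u xs w"
  shows "c \<in> set xs"
proof (rule ccontr)
  assume c_notin: "c \<notin> set xs"
  have uw: "u \<in> V" "w \<in> V" using walk_betw_ends_in[OF xs] by auto
  obtain g1 g2 where g1: "geodesic u g1 c" and g2: "geodesic c g2 w"
    using geodesic_exists uw c(1) by metis
  define g p where "g = g1 @ tl g2" and "p = d u c"
  have g: "geodesic u g w" unfolding g_def using geodesic_append[OF g1 g2 between] .
  have gp: "g ! p = c"
    unfolding g_def p_def using geodesic_length[OF g1] geodesic_last[OF g1] by (simp add: nth_append)
  have p: "0 < p" "p < d u w"
    using between dist_eq_0_iff[of u c] dist_eq_0_iff[of c w] c uw unfolding p_def by auto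
  have "{g ! (p - 1), c} \<in> E" "{c, g ! Suc p} \<in> E"
    using edge_on_geodesic[OF g, of "p - 1"] edge_on_geodesic[OF g, of p] p gp by auto
  moreover have "d (g ! (p - 1)) (g ! Suc p) = 2"
    using geodesic_subpath(2)[OF g, of "p - 1" "Suc p"] p by simp
  moreover from this have "g ! (p - 1) \<noteq> g ! Suc p"
    using geodesic_nth_in[OF g, of "Suc p"] p by auto
  ultimately have "{g ! (p - 1), g ! Suc p} \<in> E"
    using edge_of_detour detour_around_geodesic_vertex[OF g p xs] c_notin gp by metis
  then show False using dist_edge \<open>d (g ! (p - 1)) (g ! Suc p) = 2\<close> by simp
qed

lemma geodesic_nth_dist:
  assumes g: "geodesic u g w" and z: "z \<in> V" and between: "d u z + d z w = d u w"
  shows "g ! d u z = z"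
proof -
  have uw: "u \<in> V" "w \<in> V" using geodesic_ends_in[OF g] by auto
  consider "z = u" | "z = w" | "z \<noteq> u" "z \<noteq> w" by blast
  then show ?thesis
  proof cases
    case 3
    then have "z \<in> set g" using geodesic_vertex_on_walk[OF between z] geodesic_walk[OF g] by blast
    then obtain m where "m < length g" "g ! m = z" by (auto simp: in_set_conv_nth)
    then show ?thesis using dist_geodesic_nth[OF g, of m] geodesic_length[OF g] by simp
  qed (use geodesic_first[OF g] geodesic_last[OF g] uw between in auto)
qed

lemma dist_middle_less:
  assumes ab: "{a, b} \<in> E" and bc: "{b, c} \<in> E" and dac: "d a c = 2" and x: "x \<in> V"
  shows "d x b < max (d x a) (d x c)"
proof (rule ccontr)
  assume "\<not> ?thesis"
  then have far: "d x a \<le> d x b" "d x c \<le> d x b" by auto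
  have V: "a \<in> V" "b \<in> V" "c \<in> V" using edge_ends ab bc by auto
  have "x \<noteq> b" using far dist_edge[OF ab] dist_commute V by (metis dist_self not_one_le_zero)
  obtain ga gc where ga: "geodesic a ga x" and gc: "geodesic x gc c"
    using geodesic_exists V x by metis
  have "b \<notin> set ga"
  proof
    assume "b \<in> set ga"
    then obtain m where m: "m < length ga" "ga ! m = b" by (auto simp: in_set_conv_nth)
    then have "m = 1" using dist_geodesic_nth[OF ga, of m] dist_edge[OF ab] geodesic_length[OF ga] by simp
    then have "d b x = d a x - 1"
      using dist_geodesic_nth_last[OF ga, of m] m geodesic_length[OF ga] by simp
    then show False using far(1) m \<open>m = 1\<close> geodesic_length[OF ga] dist_commute V x by simp
  qed
  moreover have "b \<notin> set gc"
  proof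
    assume "b \<in> set gc"
    then obtain m where m: "m < length gc" "gc ! m = b" by (auto simp: in_set_conv_nth)
    then have "d x c = d x b + 1"
      using dist_geodesic_nth[OF gc, of m] dist_geodesic_nth_last[OF gc, of m] dist_edge[OF bc]
        geodesic_length[OF gc] by simp
    then show False using far(2) by simp
  qed
  ultimately have "b \<notin> set (ga @ tl gc)" using set_tl_subset[of gc] by auto
  moreover have "d a b + d b c = d a c" using dist_edge ab bc dac by simp
  moreover have "a \<noteq> b" "b \<noteq> c" using edge_ends ab bc by auto
  ultimately show False
    using geodesic_vertex_on_walk[OF _ V(2), of a c]
      walk_betw_append[OF geodesic_walk[OF ga] geodesic_walk[OF gc]] by blast
qed

lemma dist_along_geodesic:
  assumes g: "geodesic u g v" and x: "x \<in> V" and a: "a \<le> d u v"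
  shows "d x (g ! a) \<le> max (d x u - a) (d x v - (d u v - a))"
proof -
  let ?f = "\<lambda>j. d x (g ! j)"
  have "?f a \<le> max (?f 0 - a) (?f (d u v) - (d u v - a))"
  proof (rule no_interior_max_bound[where f = ?f])
    fix j assume "j < d u v"
    then show "?f (Suc j) \<le> ?f j + 1 \<and> ?f j \<le> ?f (Suc j) + 1"
      using dist_edge_lipschitz[OF edge_on_geodesic[OF g] x] by simp
  next
    fix j assume j: "0 < j" "j < d u v"
    have "{g ! (j - 1), g ! j} \<in> E" "{g ! j, g ! Suc j} \<in> E"
      using edge_on_geodesic[OF g, of "j - 1"] edge_on_geodesic[OF g, of j] j by simp_all
    moreover have "d (g ! (j - 1)) (g ! Suc j) = 2"
      using geodesic_subpath(2)[OF g, of "j - 1" "Suc j"] j by simp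
    ultimately show "?f j < max (?f (j - 1)) (?f (Suc j))" using dist_middle_less x by blast
  qed (use a in simp)
  then show ?thesis using geodesic_first[OF g] geodesic_last[OF g] by simp
qed

lemma mutual_visibility_set_no_three_on_geodesic:
  assumes M: "mutual_visibility_set V E M" and g: "geodesic u g v"
    and ijk: "i < j" "j < k" "k \<le> d u v" and in_M: "g ! i \<in> M" "g ! j \<in> M" "g ! k \<in> M"
  shows False
proof -
  obtain xs where xs: "geodesic (g ! i) xs (g ! k)" "internal xs \<inter> M = {}"
    using M in_M unfolding mutual_visibility_set_def by blast
  have dist: "d (g ! i) (g ! j) = j - i" "d (g ! j) (g ! k) = k - j" "d (g ! i) (g ! k) = k - i"
    using geodesic_subpath(2)[OF g] ijk by simp_all
  then have "xs ! (j - i) = g ! j"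
    using geodesic_nth_dist[OF xs(1) geodesic_nth_in[OF g, of j]] ijk by simp
  moreover have "0 < j - i" "Suc (j - i) < length xs" using geodesic_length[OF xs(1)] dist ijk by auto
  ultimately have "g ! j \<in> internal xs" unfolding in_internal_iff by blast
  then show False using xs(2) in_M by blast
qed

lemma mutual_visibility_set_meets_geodesic:
  assumes M: "mutual_visibility_set V E M" and g: "geodesic u g v"
  shows "card (M \<inter> set g) \<le> 2"
proof -
  let ?I = "{i. i \<le> d u v \<and> g ! i \<in> M}"
  have set_g: "set g = (\<lambda>i. g ! i) ` {..d u v}"
    using geodesic_length[OF g] by (auto simp: in_set_conv_nth image_iff less_Suc_eq_le)
  show ?thesis
  proof (cases "?I = {}")
    case True
    then have "M \<inter> set g = {}" unfolding set_g by auto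
    then show ?thesis by simp
  next
    case False
    have "finite ?I" by simp
    have "j \<in> {Min ?I, Max ?I}" if j: "j \<in> ?I" for j
    proof (rule ccontr)
      assume "j \<notin> {Min ?I, Max ?I}"
      then have "Min ?I < j" "j < Max ?I"
        using Min_le[OF \<open>finite ?I\<close> j] Max_ge[OF \<open>finite ?I\<close> j] by auto
      moreover have "Min ?I \<in> ?I" "Max ?I \<in> ?I"
        using Min_in[OF \<open>finite ?I\<close> False] Max_in[OF \<open>finite ?I\<close> False] by auto
      ultimately show False
        using mutual_visibility_set_no_three_on_geodesic[OF M g, of "Min ?I" j "Max ?I"] j by auto
    qed
    then have "M \<inter> set g \<subseteq> (\<lambda>i. g ! i) ` {Min ?I, Max ?I}" unfolding set_g by auto
    then have "card (M \<inter> set g) \<le> card ((\<lambda>i. g ! i) ` {Min ?I, Max ?I})" by (intro card_mono) auto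
    also have "\<dots> \<le> 2" by (rule order.trans[OF card_image_le]) (auto simp: card_insert_le_m1)
    finally show ?thesis .
  qed
qed

lemma diam_le_chi_mu: "D + 1 \<le> 2 * chi_mu V E"
proof -
  obtain u v g where g: "geodesic u g v" "d u v = D" using diametral_geodesic_exists by blast
  obtain P where P: "partition_on V P" "finite P" "card P = chi_mu V E"
    "\<forall>M\<in>P. mutual_visibility_set V E M"
    using chi_mu_attained by blast
  have "D + 1 = card (set g)"
    using distinct_card[OF geodesic_distinct[OF g(1)]] geodesic_length[OF g(1)] g(2) by simp
  also have "set g = (\<Union>M\<in>P. M \<inter> set g)"
    using geodesic_set[OF g(1)] P(1) unfolding partition_on_def by auto
  also have "card \<dots> \<le> (\<Sum>M\<in>P. card (M \<inter> set g))" by (rule card_UN_le[OF P(2)])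
  also have "\<dots> \<le> (\<Sum>M\<in>P. 2)"
    using mutual_visibility_set_meets_geodesic[OF _ g(1)] P(4) by (intro sum_mono) auto
  finally show ?thesis using P(3) by simp
qed

lemma ecc_on_diametral_geodesic:
  assumes g: "geodesic u g v" "d u v = D" and a: "a \<le> D"
  shows "ecc V E (g ! a) \<le> max (D - a) a"
proof (rule ecc_le)
  fix x assume x: "x \<in> V"
  have "d x (g ! a) \<le> max (d x u - a) (d x v - (D - a))"
    using dist_along_geodesic[OF g(1) x] g(2) a by simp
  moreover have "d x u \<le> D" "d x v \<le> D" using dist_le_diam x geodesic_ends_in[OF g(1)] by auto
  ultimately show "d x (g ! a) \<le> max (D - a) a" using a by linarith
qed

lemma twice_rad_le_Suc_diam: "2 * r \<le> D + 1"
proof -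
  obtain u v g where g: "geodesic u g v" "d u v = D" using diametral_geodesic_exists by blast
  have "r \<le> ecc V E (g ! (D div 2))"
    using rad_le_ecc geodesic_nth_in[OF g(1)] g(2) by simp
  also have "\<dots> \<le> D - D div 2" using ecc_on_diametral_geodesic[OF g, of "D div 2"] by simp
  finally show ?thesis by linarith
qed

lemma dist_center_on_diametral_geodesic:
  assumes g: "geodesic u g v" "d u v = D" and c: "c \<in> C" and a: "a \<le> D"
  shows "d c (g ! a) \<le> max (r - a) (r - (D - a))"
proof -
  have "c \<in> V" "d c u \<le> r" "d c v \<le> r"
    using c center_iff dist_le_rad_if_center geodesic_ends_in[OF g(1)] by auto
  then show ?thesis using dist_along_geodesic[OF g(1)] g(2) a by fastforce
qed

lemma center_on_diametral_geodesic:
  assumes g: "geodesic u g v" "d u v = D" and a: "D - r \<le> a" "a \<le> r"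
  shows "g ! a \<in> C"
proof -
  have "a \<le> D" using a twice_rad_le_Suc_diam by linarith
  then have "g ! a \<in> V" using geodesic_nth_in[OF g(1)] g(2) by simp
  moreover have "ecc V E (g ! a) \<le> r"
    using ecc_on_diametral_geodesic[OF g \<open>a \<le> D\<close>] a by simp
  ultimately show ?thesis using rad_le_ecc center_iff by fastforce
qed

lemma center_singleton_if_even:
  assumes "D = 2 * r" shows "\<exists>c. C = {c}"
proof -
  obtain u v g where g: "geodesic u g v" "d u v = D" using diametral_geodesic_exists by blast
  have "g ! r \<in> C" using center_on_diametral_geodesic[OF g] assms by simp
  moreover have "c = g ! r" if "c \<in> C" for c
    using dist_center_on_diametral_geodesic[OF g that, of r] assms dist_eq_0_iff center_iff that
      geodesic_nth_in[OF g(1), of r] g(2) by simp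
  ultimately show ?thesis by blast
qed

lemma center_if_odd:
  assumes odd: "D + 1 = 2 * r"
  obtains c1 c2 where "c1 \<in> C" "c2 \<in> C" "{c1, c2} \<in> E" "\<forall>c\<in>C. d c c1 \<le> 1 \<and> d c c2 \<le> 1"
proof -
  obtain u v g where g: "geodesic u g v" "d u v = D" using diametral_geodesic_exists by blast
  have "g ! (r - 1) \<in> C" "g ! r \<in> C" using center_on_diametral_geodesic[OF g] odd by auto
  moreover have "{g ! (r - 1), g ! r} \<in> E" using edge_on_geodesic[OF g(1), of "r - 1"] g(2) odd by simp
  moreover have "d c (g ! (r - 1)) \<le> 1 \<and> d c (g ! r) \<le> 1" if "c \<in> C" for c
    using dist_center_on_diametral_geodesic[OF g that, of "r - 1"]
      dist_center_on_diametral_geodesic[OF g that, of r] odd by simp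
  ultimately show ?thesis using that by blast
qed

lemma center_adjacent_if_odd:
  assumes odd: "D + 1 = 2 * r" and ab: "a \<in> C" "b \<in> C" "a \<noteq> b"
  shows "{a, b} \<in> E"
proof -
  obtain c1 c2 where c: "c1 \<in> C" "c2 \<in> C" "{c1, c2} \<in> E" "\<forall>c\<in>C. d c c1 \<le> 1 \<and> d c c2 \<le> 1"
    using center_if_odd[OF odd] by blast
  have V: "a \<in> V" "b \<in> V" "c1 \<in> V" "c2 \<in> V" using ab c center_iff by auto
  have near: "x = c1 \<or> {x, c1} \<in> E" "x = c2 \<or> {x, c2} \<in> E" if "x \<in> C" for x
    using dist_le_1_cases that c(4) center_iff V by auto
  show ?thesis
  proof (cases "a \<in> {c1, c2} \<or> b \<in> {c1, c2}")
    case True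
    then show ?thesis using near[OF ab(1)] near[OF ab(2)] c(3) ab(3) by (auto simp: insert_commute)
  next
    case False
    then have "{a, c1} \<in> E" "{c1, b} \<in> E" "{a, c2} \<in> E" "{c2, b} \<in> E"
      using near[OF ab(1)] near[OF ab(2)] by (auto simp: insert_commute)
    moreover have "walk_betw (V - {c1}) E a [a, c2, b] b"
      using calculation V False edge_ends(1)[OF c(3)]
      by (simp add: walk_betw_def walk_in_def nth_Cons split: nat.splits)
    ultimately show ?thesis using edge_of_detour ab(3) by blast
  qed
qed

text \<open>A vertex outside the center has a farthest vertex at distance \<open>r + 1\<close>, and then each central
  neighbour lies on the geodesic towards it at the same position.\<close>

lemma center_if_adjacent_to_two_central:
  assumes y: "y \<in> V" "{y, a} \<in> E" "{y, b} \<in> E" and ab: "a \<in> C" "b \<in> C" "a \<noteq> b"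
  shows "y \<in> C"
proof (rule ccontr)
  assume "y \<notin> C"
  then have far: "r < ecc V E y" using rad_le_ecc[OF y(1)] center_iff y(1) by fastforce
  obtain z where z: "z \<in> V" "d z y = ecc V E y" using ecc_attained by blast
  have on_geodesic: "d z x + d x y = d z y \<and> d z x = r" if "x \<in> C" "{y, x} \<in> E" for x
  proof -
    have "x \<in> V" "d z x \<le> r" using that center_iff dist_le_rad_if_center z(1) by auto
    moreover have "d x y = 1" using dist_edge[OF that(2)] dist_commute[OF y(1) \<open>x \<in> V\<close>] by simp
    ultimately show ?thesis using dist_triangle[OF z(1) y(1) \<open>x \<in> V\<close>] far z(2) by linarith
  qed
  obtain g where g: "geodesic z g y" using geodesic_exists z(1) y(1) by blast
  have "g ! r = a" "g ! r = b"
    using on_geodesic[OF ab(1) y(2)] on_geodesic[OF ab(2) y(3)] geodesic_nth_dist[OF g]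
      ab center_iff by force+
  then show False using ab(3) by simp
qed

end

section \<open>Block graphs of even diameter\<close>

locale block_graph_even_diam = connected_block_graph +
  fixes c
  assumes center_eq: "C = {c}" and diam_eq: "D = 2 * r" and rad_pos: "0 < r"
begin

text \<open>The components of \<open>G - F\<close> in the definition of \<open>deg\<^sup>*(C)\<close> are the branches at \<open>c\<close>.\<close>

abbreviation "E\<^sub>c \<equiv> E - {e \<in> E. c \<in> e}"
abbreviation "branch \<equiv> component_of V E\<^sub>c"

lemma c_in_V: "c \<in> V"
  using center_eq center_iff by auto

lemma dist_c_le_rad: "v \<in> V \<Longrightarrow> d v c \<le> r"
  using dist_le_rad_if_center center_eq by auto

lemma dist_c_pos: "v \<in> V \<Longrightarrow> v \<noteq> c \<Longrightarrow> 0 < d v c"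
  using dist_eq_0_iff c_in_V by auto

lemma walk_avoiding_c_iff:
  assumes "u \<noteq> c"
  shows "walk_betw V E\<^sub>c u xs w \<longleftrightarrow> walk_betw V E u xs w \<and> c \<notin> set xs"
proof
  assume w: "walk_betw V E\<^sub>c u xs w"
  have "c \<notin> set xs"
  proof
    assume "c \<in> set xs"
    then obtain p where p: "p < length xs" "xs ! p = c" by (auto simp: in_set_conv_nth)
    have "xs ! 0 = u" using w walk_betw_nonempty[OF w] by (simp add: walk_betw_def hd_conv_nth)
    then have "p \<noteq> 0" using p(2) assms by (cases "p = 0") auto
    moreover have "\<forall>i. Suc i < length xs \<longrightarrow> {xs ! i, xs ! Suc i} \<in> E\<^sub>c"
      using w unfolding walk_betw_def walk_in_def by blast
    moreover have "Suc (p - 1) < length xs" using p(1) \<open>p \<noteq> 0\<close> by simp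
    ultimately have "{xs ! (p - 1), xs ! Suc (p - 1)} \<in> E\<^sub>c" by blast
    then show False using p \<open>p \<noteq> 0\<close> by simp
  qed
  then show "walk_betw V E u xs w \<and> c \<notin> set xs"
    using walk_betw_mono_edges[OF w, of E] w by (auto simp: walk_betw_def walk_in_def)
next
  assume "walk_betw V E u xs w \<and> c \<notin> set xs"
  then show "walk_betw V E\<^sub>c u xs w"
    by (auto intro!: walk_betw_mono_edges simp: walk_betw_def walk_in_def dest: nth_mem)
qed

lemma c_notin_geodesic:
  assumes g: "geodesic u g w" and less: "d u w < d u c + d w c"
  shows "c \<notin> set g"
proof
  assume "c \<in> set g"
  then obtain p where "p \<le> d u w" "g ! p = c"
    using geodesic_length[OF g] by (auto simp: in_set_conv_nth less_Suc_eq_le)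
  then show False
    using dist_geodesic_nth[OF g] dist_geodesic_nth_last[OF g] less
      dist_commute[OF c_in_V] geodesic_ends_in[OF g] by force
qed

lemma same_branch_iff:
  assumes u: "u \<in> V" "u \<noteq> c" and w: "w \<in> V" "w \<noteq> c"
  shows "branch u = branch w \<longleftrightarrow> d u w < d u c + d w c"
proof -
  have "reachable V E\<^sub>c u w \<longleftrightarrow> d u w < d u c + d w c"
  proof
    assume less: "d u w < d u c + d w c"
    obtain g where g: "geodesic u g w" using geodesic_exists u w by blast
    then show "reachable V E\<^sub>c u w"
      using walk_avoiding_c_iff[OF u(2)] geodesic_walk[OF g] c_notin_geodesic[OF g less]
      by (auto simp: reachable_def)
  next
    assume "reachable V E\<^sub>c u w"
    then obtain xs where "walk_betw V E u xs w" "c \<notin> set xs"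
      using walk_avoiding_c_iff[OF u(2)] by (auto simp: reachable_def)
    then have "d u c + d c w \<noteq> d u w"
      using geodesic_vertex_on_walk c_in_V u(2) w(2) by metis
    then show "d u w < d u c + d w c"
      using dist_triangle[OF u(1) w(1) c_in_V] dist_commute[OF c_in_V w(1)] by simp
  qed
  then show ?thesis using component_of_eq_iff[OF u(1)] by simp
qed

lemma geodesic_to_c_nth:
  assumes g: "geodesic x g c" and p: "p < d x c"
  shows "g ! p \<noteq> c" "branch (g ! p) = branch x" "d (g ! p) c = d x c - p"
proof -
  have x: "x \<in> V" "x \<noteq> c" using geodesic_ends_in[OF g] p by auto
  have "c \<notin> set (take (Suc p) g)"
    using distinct_nth_notin_set_take[OF geodesic_distinct[OF g] p] geodesic_last[OF g]
      geodesic_length[OF g] by simp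
  then show "g ! p \<noteq> c" using p geodesic_length[OF g] by (simp add: in_set_conv_nth)
  have "walk_betw V E x (take (Suc p) g) (g ! p)"
    using walk_betw_take[OF geodesic_walk[OF g], of p] p geodesic_length[OF g] by simp
  then have "reachable V E\<^sub>c x (g ! p)"
    using walk_avoiding_c_iff[OF x(2)] \<open>c \<notin> set (take (Suc p) g)\<close> by (auto simp: reachable_def)
  then show "branch (g ! p) = branch x" using component_of_eq_iff[OF x(1)] by (simp add: eq_commute)
  show "d (g ! p) c = d x c - p" using dist_geodesic_nth_last[OF g] p by simp
qed

lemma same_branch_on_geodesic:
  assumes g: "geodesic u g w" "c \<notin> set g" and z: "z \<in> set g"
  shows "branch z = branch u"
proof -
  obtain p where p: "p < length g" "g ! p = z" using z by (auto simp: in_set_conv_nth)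
  have "walk_betw V E u (take (Suc p) g) z"
    using walk_betw_take[OF geodesic_walk[OF g(1)] p(1)] p(2) by simp
  moreover have "c \<notin> set (take (Suc p) g)" using g(2) in_set_takeD by fastforce
  moreover have "u \<noteq> c" "u \<in> V"
    using g(2) walk_betw_ends_in_set[OF geodesic_walk[OF g(1)]] geodesic_ends_in[OF g(1)] by auto
  ultimately have "reachable V E\<^sub>c u z" using walk_avoiding_c_iff by (auto simp: reachable_def)
  then show ?thesis using component_of_eq_iff[OF \<open>u \<in> V\<close>] by (simp add: eq_commute)
qed

text \<open>With \<open>h\<close> constantly \<open>r\<close> the colour is the distance to \<open>c\<close>; exchanging the colours \<open>r\<close> and
  \<open>h K\<close> inside each branch \<open>K\<close> lets radial vertices of different branches get different colours.\<close>

definition color :: "('a set \<Rightarrow> nat) \<Rightarrow> 'a \<Rightarrow> nat" where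
  "color h v = (if v = c then 0 else transpose r (h (branch v)) (d v c))"

lemma color_le: "(\<And>K. h K \<le> r) \<Longrightarrow> v \<in> V \<Longrightarrow> color h v \<le> r"
  by (auto simp: color_def transpose_def dist_c_le_rad)

lemma color_radial: "v \<in> V \<Longrightarrow> d v c = r \<Longrightarrow> color h v = h (branch v)"
  using dist_c_pos rad_pos by (auto simp: color_def)

lemma color_eq_0:
  assumes "v \<in> V" "v \<noteq> c" "color h v = 0" shows "h (branch v) = 0" "d v c = r"
  using assms dist_c_pos[of v] rad_pos by (auto simp: color_def transpose_eq_iff)

lemma color_ne_same_branch:
  assumes "z \<noteq> c" "u \<noteq> c" "branch z = branch u" "d z c \<noteq> d u c"
  shows "color h z \<noteq> color h u"
  using assms transpose_eq_imp_eq by (fastforce simp: color_def)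

lemma color_ne_on_geodesic_to_c:
  assumes g: "geodesic x g c" and z: "z \<in> set g" "z \<noteq> x" "z \<noteq> c"
  shows "color h z \<noteq> color h x"
proof -
  obtain p where p: "p \<le> d x c" "g ! p = z"
    using z(1) geodesic_length[OF g] by (auto simp: in_set_conv_nth less_Suc_eq_le)
  have "p \<noteq> 0" using p z(2) geodesic_first[OF g] by (cases "p = 0") auto
  have "p \<noteq> d x c" using p z(3) geodesic_last[OF g] by (cases "p = d x c") auto
  then have "p < d x c" using p(1) by simp
  moreover have "x \<noteq> c" using \<open>p < d x c\<close> c_in_V by auto
  ultimately show ?thesis
    using geodesic_to_c_nth[OF g \<open>p < d x c\<close>] color_ne_same_branch[of z x] p(2) \<open>p \<noteq> 0\<close> z(3)
    by simp
qed

lemma visible_from_c: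
  assumes w: "w \<in> V" "w \<noteq> c" and color_w: "color h w = color h c"
  shows "\<exists>xs. geodesic c xs w \<and> (\<forall>z\<in>internal xs. color h z \<noteq> color h c) \<and> length xs \<le> D"
proof -
  obtain g where g: "geodesic w g c" using geodesic_exists w c_in_V by blast
  have "\<forall>z\<in>internal (rev g). color h z \<noteq> color h c"
    using color_ne_on_geodesic_to_c[OF g, where h = h] internal_geodesic[OF g] color_w by auto
  moreover have "length (rev g) \<le> D"
    using geodesic_length[OF g] dist_c_le_rad[OF w(1)] diam_eq rad_pos by simp
  ultimately show ?thesis using geodesic_rev[OF g] by blast
qed

lemma visible_same_branch:
  assumes u: "u \<in> V" "u \<noteq> c" and w: "w \<in> V" "w \<noteq> c"
    and same: "branch u = branch w" and color_eq: "color h u = color h w"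
  shows "\<exists>xs. geodesic u xs w \<and> (\<forall>z\<in>internal xs. color h z \<noteq> color h u) \<and> length xs \<le> D"
proof -
  have level: "d u c = d w c"
    by (rule ccontr) (use color_ne_same_branch[OF u(2) w(2) same, of h] color_eq in simp)
  have less: "d u w < d u c + d w c" using same_branch_iff u w same by blast
  obtain g where g: "geodesic u g w" using geodesic_exists u w by blast
  have "color h z \<noteq> color h u" if "z \<in> internal g" for z
  proof -
    obtain p where p: "0 < p" "p < d u w" "g ! p = z"
      using \<open>z \<in> internal g\<close> geodesic_length[OF g] unfolding in_internal_iff by auto
    have "z \<in> set g" using internal_geodesic[OF g that] by simp
    then have "z \<noteq> c" "branch z = branch u"
      using c_notin_geodesic[OF g less] same_branch_on_geodesic[OF g] by auto
    have "d c z \<le> max (d c u - p) (d c w - (d u w - p))"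
      using dist_along_geodesic[OF g c_in_V, of p] p by simp
    then have "d z c < d u c"
      using level p dist_commute[OF c_in_V] u(1) w(1) geodesic_nth_in[OF g, of p] dist_c_pos[OF u]
      by auto
    then show ?thesis using color_ne_same_branch[OF \<open>z \<noteq> c\<close> u(2) \<open>branch z = branch u\<close>] by simp
  qed
  moreover have "length g \<le> D"
    using geodesic_length[OF g] less level dist_c_le_rad[OF u(1)] diam_eq by simp
  ultimately show ?thesis using g by blast
qed

lemma visible_other_branch:
  assumes u: "u \<in> V" "u \<noteq> c" and w: "w \<in> V" "w \<noteq> c"
    and other: "branch u \<noteq> branch w" and color_eq: "color h u = color h w"
    and h0: "h (branch u) = 0 \<Longrightarrow> h (branch w) = 0 \<Longrightarrow> branch u = branch w"
  shows "\<exists>xs. geodesic u xs w \<and> (\<forall>z\<in>internal xs. color h z \<noteq> color h u) \<and>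
    length xs = d u c + d w c + 1"
proof -
  have between: "d u c + d c w = d u w"
    using same_branch_iff u w other dist_triangle[OF u(1) w(1) c_in_V] dist_commute[OF c_in_V w(1)]
    by simp
  obtain g1 g2 where g1: "geodesic u g1 c" and g2: "geodesic w g2 c"
    using geodesic_exists u w c_in_V by metis
  let ?xs = "g1 @ tl (rev g2)"
  have xs: "geodesic u ?xs w" using geodesic_append[OF g1 geodesic_rev[OF g2] between] .
  have "color h z \<noteq> color h u" if z: "z \<in> internal ?xs" for z
  proof -
    have "z \<in> set g1 \<or> z \<in> set g2" "z \<noteq> u" "z \<noteq> w"
      using internal_geodesic[OF xs z] set_tl_subset[of "rev g2"] by auto
    moreover have "color h u \<noteq> 0"
      using color_eq_0[OF u, of h] color_eq_0[OF w, of h] color_eq h0 other by auto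
    then have "color h u \<noteq> color h c" by (simp add: color_def)
    ultimately show ?thesis
      using color_ne_on_geodesic_to_c[OF g1, of z h] color_ne_on_geodesic_to_c[OF g2, of z h] color_eq
      by (cases "z = c") auto
  qed
  moreover have "length ?xs = d u c + d w c + 1"
    using geodesic_length[OF xs] between dist_commute[OF c_in_V w(1)] by simp
  ultimately show ?thesis using xs by blast
qed

lemma visible:
  assumes h0: "\<And>u w. u \<in> V \<Longrightarrow> w \<in> V \<Longrightarrow> u \<noteq> c \<Longrightarrow> w \<noteq> c \<Longrightarrow>
      h (branch u) = 0 \<Longrightarrow> h (branch w) = 0 \<Longrightarrow> branch u = branch w"
    and u: "u \<in> V" and w: "w \<in> V" and color_eq: "color h u = color h w"
  shows "\<exists>xs. geodesic u xs w \<and> (\<forall>z\<in>internal xs. color h z \<noteq> color h u) \<and>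
    (length xs \<le> D \<or> d u c = r \<and> d w c = r \<and> branch u \<noteq> branch w)"
proof -
  consider "u = w" | "u \<noteq> w" "u = c" | "u \<noteq> w" "w = c" | "u \<noteq> c" "w \<noteq> c" by blast
  then show ?thesis
  proof cases
    case 1
    then show ?thesis using geodesic_singleton[OF u] diam_eq rad_pos by (auto simp: internal_def)
  next
    case 2
    then obtain xs where "geodesic c xs w" "\<forall>z\<in>internal xs. color h z \<noteq> color h c" "length xs \<le> D"
      using visible_from_c[OF w, of h] color_eq by auto
    then show ?thesis using 2 by (intro exI[of _ xs]) auto
  next
    case 3
    then obtain xs where "geodesic c xs u" "\<forall>z\<in>internal xs. color h z \<noteq> color h c" "length xs \<le> D"
      using visible_from_c[OF u, of h] color_eq by auto
    then show ?thesis using geodesic_rev 3 color_eq by (intro exI[of _ "rev xs"]) auto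
  next
    case 4
    show ?thesis
    proof (cases "branch u = branch w")
      case True
      then show ?thesis using visible_same_branch[OF u 4(1) w 4(2) _ color_eq] by blast
    next
      case False
      then obtain xs where "geodesic u xs w" "\<forall>z\<in>internal xs. color h z \<noteq> color h u"
        "length xs = d u c + d w c + 1"
        using visible_other_branch[OF u 4(1) w 4(2) False color_eq] h0 u w 4 by blast
      moreover have "d u c \<le> r" "d w c \<le> r" using dist_c_le_rad u w by auto
      ultimately show ?thesis using False diam_eq by (intro exI[of _ xs]) auto
    qed
  qed
qed

lemma radial_iff: "radial V E u \<longleftrightarrow> u \<in> V \<and> d u c = r"
  by (simp add: radial_def center_eq)

lemma deg_star_center_eq: "deg_star_center V E = card (branch ` {u \<in> V. d u c = r})"
  using components_meeting[of V "E\<^sub>c" "radial V E"]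
  by (simp add: deg_star_center_def center_eq radial_iff Let_def)

lemma chi_mu_le: "chi_mu V E \<le> r + 1"
proof -
  have "chi_mu_k D V E \<le> r + 1"
  proof (rule chi_mu_k_le_coloring[where \<kappa> = "color (\<lambda>_. r)"])
    fix v assume "v \<in> V"
    then show "color (\<lambda>_. r) v < r + 1" using color_le[of "\<lambda>_. r"] by fastforce
  next
    fix u w assume uw: "u \<in> V" "w \<in> V" "color (\<lambda>_. r) u = color (\<lambda>_. r) w"
    have "\<exists>xs. geodesic u xs w \<and> (\<forall>z\<in>internal xs. color (\<lambda>_. r) z \<noteq> color (\<lambda>_. r) u)"
      using visible[of "\<lambda>_. r", OF _ uw] rad_pos by auto
    then obtain xs where "geodesic u xs w" "\<forall>z\<in>internal xs. color (\<lambda>_. r) z \<noteq> color (\<lambda>_. r) u"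
      by blast
    then show "\<exists>xs. geodesic u xs w \<and> (\<forall>z\<in>internal xs. color (\<lambda>_. r) z \<noteq> color (\<lambda>_. r) u) \<and>
        length xs \<le> Suc D"
      using geodesic_length dist_le_diam \<open>u \<in> V\<close> \<open>w \<in> V\<close> by fastforce
  qed
  then show ?thesis using chi_mu_le_chi_mu_k[of D] by simp
qed

text \<open>If the radial branches are few, give them pairwise distinct values of \<open>h\<close>; then two radial
  vertices of different branches never share a colour, so no geodesic of length \<open>D\<close> is needed.\<close>

lemma chi_mu_k_le:
  assumes few: "card (branch ` {u \<in> V. d u c = r}) \<le> r + 1"
  shows "chi_mu_k (D - 1) V E \<le> r + 1"
proof -
  let ?B = "branch ` {u \<in> V. d u c = r}"
  obtain h where h: "inj_on h ?B" "\<And>K. h K \<le> r" "\<And>K. K \<notin> ?B \<Longrightarrow> h K = r"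
    using finite_injective_labelling[of ?B r] few finite_V by auto
  have h0: "branch u = branch w" if "h (branch u) = 0" "h (branch w) = 0" for u w
  proof -
    have "branch u \<in> ?B" "branch w \<in> ?B"
      using that h(3)[of "branch u"] h(3)[of "branch w"] rad_pos by auto
    then show ?thesis using inj_onD[OF h(1), of "branch u" "branch w"] that by simp
  qed
  show ?thesis
  proof (rule chi_mu_k_le_coloring[where \<kappa> = "color h"])
    fix v assume "v \<in> V"
    then show "color h v < r + 1" using color_le[of h] h(2) by fastforce
  next
    fix u w assume uw: "u \<in> V" "w \<in> V" and color_eq: "color h u = color h w"
    then obtain xs where xs: "geodesic u xs w" "\<forall>z\<in>internal xs. color h z \<noteq> color h u"
      "length xs \<le> D \<or> d u c = r \<and> d w c = r \<and> branch u \<noteq> branch w"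
      using visible[of h] h0 by blast
    have "\<not> (d u c = r \<and> d w c = r \<and> branch u \<noteq> branch w)"
      using color_eq color_radial[OF uw(1)] color_radial[OF uw(2)] inj_onD[OF h(1), of "branch u" "branch w"] uw
      by auto
    then show "\<exists>xs. geodesic u xs w \<and> (\<forall>z\<in>internal xs. color h z \<noteq> color h u) \<and>
        length xs \<le> Suc (D - 1)"
      using xs diam_eq rad_pos by (intro exI[of _ xs]) auto
  qed
qed

text \<open>Radial vertices of different branches are at distance \<open>2 r = D\<close>.\<close>

lemma card_branches_le_chi_mu_k: "card (branch ` {u \<in> V. d u c = r}) \<le> chi_mu_k (D - 1) V E"
proof (rule card_image_le_chi_mu_k)
  fix u w assume u: "u \<in> {u \<in> V. d u c = r}" and w: "w \<in> {u \<in> V. d u c = r}"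
    and "branch u \<noteq> branch w"
  moreover have "u \<noteq> c" "w \<noteq> c" using u w rad_pos c_in_V by auto
  ultimately have "\<not> d u w < d u c + d w c" using same_branch_iff by blast
  then show "D - 1 < d u w" using u w diam_eq rad_pos by simp
qed auto

end

section \<open>Block graphs of odd diameter\<close>

locale block_graph_odd_diam = connected_block_graph +
  assumes diam_eq: "D + 1 = 2 * r"
begin

lemma rad_pos: "0 < r"
  using diam_eq by simp

lemma center_subset: "C \<subseteq> V"
  by (auto simp: center_iff)

lemma center_adjacent: "a \<in> C \<Longrightarrow> b \<in> C \<Longrightarrow> a \<noteq> b \<Longrightarrow> {a, b} \<in> E"
  using center_adjacent_if_odd[OF diam_eq] by blast

lemma two_le_card_center: "2 \<le> card C"
proof -
  obtain c1 c2 where c: "c1 \<in> C" "c2 \<in> C" "{c1, c2} \<in> E" using center_if_odd[OF diam_eq] by blast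
  then have "card {c1, c2} \<le> card C"
    using finite_subset[OF center_subset finite_V] by (intro card_mono) auto
  then show ?thesis using edge_ends(1)[OF c(3)] by simp
qed

lemma center_closer:
  assumes ab: "a \<in> C" "b \<in> C" "a \<noteq> b" and v: "v \<in> V" and m: "d v a = m" "d v b = m" "0 < m"
  shows "\<exists>y\<in>C. d v y = m - 1"
proof -
  have V: "a \<in> V" "b \<in> V" using ab center_subset by auto
  obtain g where g: "geodesic v g a" using geodesic_exists v V by blast
  define y where "y = g ! (m - 1)"
  have y: "y \<in> V" "d v y = m - 1" "{y, a} \<in> E"
    using geodesic_nth_in[OF g] dist_geodesic_nth[OF g] edge_on_geodesic[OF g, of "m - 1"]
      geodesic_last[OF g] m unfolding y_def by auto
  have "d y b \<le> 2"
    using dist_triangle[OF y(1) V(2) V(1)] dist_edge[OF y(3)] dist_edge[OF center_adjacent[OF ab]]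
    by simp
  moreover have "d y b \<noteq> 2"
    using dist_middle_less[OF y(3) center_adjacent[OF ab] _ v] y(2) m by fastforce
  moreover have "y \<noteq> b" using y(2) m by auto
  ultimately have "{y, b} \<in> E" using dist_le_1_cases[OF y(1) V(2)] by fastforce
  then have "y \<in> C" using center_if_adjacent_to_two_central[OF y(1) y(3) _ ab] by blast
  then show ?thesis using y(2) by blast
qed

definition center_dist :: "'a \<Rightarrow> nat" where
  "center_dist v = Min ((\<lambda>a. d v a) ` C)"

lemma center_nonempty: "C \<noteq> {}"
  using two_le_card_center by auto

lemma center_dist_le: "a \<in> C \<Longrightarrow> center_dist v \<le> d v a"
  unfolding center_dist_def using finite_subset[OF center_subset finite_V] by (intro Min_le) auto

lemma center_dist_attained: "\<exists>a\<in>C. d v a = center_dist v"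
proof -
  have "center_dist v \<in> (\<lambda>a. d v a) ` C"
    unfolding center_dist_def using finite_subset[OF center_subset finite_V] center_nonempty
    by (intro Min_in) auto
  then show ?thesis by auto
qed

lemma center_dist_le_rad: assumes v: "v \<in> V" shows "center_dist v \<le> r - 1"
proof -
  obtain c1 c2 where c: "c1 \<in> C" "c2 \<in> C" "{c1, c2} \<in> E" using center_if_odd[OF diam_eq] by blast
  have "d v c1 \<le> r" "d v c2 \<le> r" using dist_le_rad_if_center c v by auto
  show ?thesis
  proof (cases "d v c1 = r \<and> d v c2 = r")
    case True
    then obtain y where "y \<in> C" "d v y = r - 1"
      using center_closer[OF c(1,2) edge_ends(1)[OF c(3)] v] rad_pos by blast
    then show ?thesis using center_dist_le[of y v] by simp
  qed (use \<open>d v c1 \<le> r\<close> \<open>d v c2 \<le> r\<close> center_dist_le[OF c(1), of v] center_dist_le[OF c(2), of v] in auto)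
qed

lemma nearest_center_unique:
  assumes v: "v \<in> V" and ab: "a \<in> C" "b \<in> C"
    and dist: "d v a = center_dist v" "d v b = center_dist v"
  shows "a = b"
proof (rule ccontr)
  assume "a \<noteq> b"
  show False
  proof (cases "center_dist v = 0")
    case True
    moreover have "a \<in> V" "b \<in> V" using ab center_subset by auto
    ultimately show False using dist_eq_0_iff[OF v] dist \<open>a \<noteq> b\<close> by auto
  next
    case False
    then obtain y where "y \<in> C" "d v y = center_dist v - 1"
      using center_closer[OF ab \<open>a \<noteq> b\<close> v dist] by auto
    then show False using center_dist_le[of y v] False by simp
  qed
qed

definition gate :: "'a \<Rightarrow> 'a" where
  "gate v = (SOME a. a \<in> C \<and> d v a = center_dist v)"

lemma gate: "gate v \<in> C" "d v (gate v) = center_dist v"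
  using someI_ex[OF center_dist_attained[of v, unfolded Bex_def]] by (auto simp: gate_def)

lemma gate_in_V: "gate v \<in> V"
  using gate(1) center_subset by auto

lemma gate_eqI: "v \<in> V \<Longrightarrow> a \<in> C \<Longrightarrow> d v a = center_dist v \<Longrightarrow> gate v = a"
  using nearest_center_unique gate by blast

lemma dist_other_center:
  assumes v: "v \<in> V" and a: "a \<in> C" "a \<noteq> gate v"
  shows "d v a = center_dist v + 1"
proof -
  have "d v a \<le> d v (gate v) + d (gate v) a" using dist_triangle v a center_subset gate_in_V by blast
  moreover have "d (gate v) a = 1" using dist_edge center_adjacent[OF gate(1) a(1)] a(2) by auto
  moreover have "d v a \<noteq> center_dist v" using gate_eqI[OF v a(1)] a(2) by auto
  ultimately show ?thesis using gate(2)[of v] center_dist_le[OF a(1), of v] by linarith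
qed

lemma center_dist_eq_0_iff: "v \<in> V \<Longrightarrow> center_dist v = 0 \<longleftrightarrow> v \<in> C"
  using gate dist_eq_0_iff center_subset center_dist_le[of v v] by (metis le_zero_eq subsetD)

lemma gate_center: "v \<in> C \<Longrightarrow> gate v = v"
  using gate_eqI center_dist_eq_0_iff center_subset by auto

lemma gate_along_geodesic:
  assumes x: "x \<in> V" and z: "z \<in> V" and between: "d x z + d z (gate x) = d x (gate x)"
  shows "gate z = gate x" "center_dist z = d z (gate x)"
proof -
  have "center_dist x \<le> d x (gate z)" using center_dist_le gate by blast
  also have "\<dots> \<le> d x z + center_dist z" using dist_triangle x z gate_in_V gate(2) by metis
  finally have "d z (gate x) \<le> center_dist z" using between gate(2)[of x] by linarith
  then show "center_dist z = d z (gate x)" using center_dist_le[OF gate(1)] by (simp add: antisym)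
  then show "gate z = gate x" using gate_eqI[OF z gate(1)] by simp
qed

lemma gate_edge_to_center:
  assumes e: "{x, y} \<in> E" and x: "x \<in> C" and y: "y \<notin> C"
  shows "gate y = x"
proof -
  have V: "x \<in> V" "y \<in> V" using edge_ends[OF e] by auto
  have "d y x = 1" using dist_edge[OF e] dist_commute V by simp
  moreover have "center_dist y \<noteq> 0" using center_dist_eq_0_iff[OF V(2)] y by simp
  ultimately have "d y x = center_dist y" using center_dist_le[OF x, of y] by simp
  then show ?thesis using gate_eqI[OF V(2) x] by simp
qed

lemma center_on_geodesic_to_gate:
  assumes g: "geodesic y g (gate y)" and a: "a \<in> C" "a \<in> set g"
  shows "a = gate y"
proof -
  obtain i where "i \<le> d y (gate y)" "g ! i = a"
    using a(2) geodesic_length[OF g] by (auto simp: in_set_conv_nth less_Suc_eq_le)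
  then have "d y a \<le> center_dist y" using dist_geodesic_nth[OF g] gate(2)[of y] by auto
  then show ?thesis
    using gate_eqI[OF _ a(1)] center_dist_le[OF a(1), of y] geodesic_ends_in[OF g] by simp
qed

text \<open>Otherwise \<open>gate x\<close> would lie on a geodesic from \<open>x\<close> to \<open>gate y\<close>, yet the walk from \<open>x\<close>
  through \<open>y\<close> along a geodesic to \<open>gate y\<close> avoids it.\<close>

lemma gate_edge_outside_center:
  assumes e: "{x, y} \<in> E" and outside: "x \<notin> C" "y \<notin> C"
  shows "gate x = gate y"
proof (rule ccontr)
  assume ne: "gate x \<noteq> gate y"
  have V: "x \<in> V" "y \<in> V" using edge_ends[OF e] by auto
  have "d x (gate y) = center_dist x + 1"
    using dist_other_center[OF V(1) gate(1)] ne by auto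
  then have between: "d x (gate x) + d (gate x) (gate y) = d x (gate y)"
    using gate(2)[of x] dist_edge[OF center_adjacent[OF gate(1) gate(1) ne]] by simp
  obtain g where g: "geodesic y g (gate y)" using geodesic_exists V gate_in_V by blast
  have "gate x \<notin> set ([x, y] @ tl g)"
    using center_on_geodesic_to_gate[OF g gate(1)] ne outside gate(1)[of x] set_tl_subset[of g]
    by auto
  moreover have "walk_betw V E x ([x, y] @ tl g) (gate y)"
    using walk_betw_append[OF walk_betw_edge[OF e V] geodesic_walk[OF g]] .
  moreover have "gate x \<noteq> x" using outside(1) gate(1)[of x] by auto
  ultimately show False using geodesic_vertex_on_walk[OF between gate_in_V] ne by blast
qed

lemma gate_edge:
  assumes e: "{x, y} \<in> E" and not_central: "\<not> (x \<in> C \<and> y \<in> C)"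
  shows "gate x = gate y"
proof -
  consider "x \<in> C" | "y \<in> C" | "x \<notin> C" "y \<notin> C" by blast
  then show ?thesis
  proof cases
    case 1
    then show ?thesis using gate_edge_to_center[OF e] gate_center not_central by auto
  next
    case 2
    then show ?thesis
      using gate_edge_to_center[of y x] e gate_center not_central by (auto simp: insert_commute)
  qed (use gate_edge_outside_center[OF e] in blast)
qed

text \<open>The graph \<open>G - E(G[C])\<close> of the definition of \<open>deg\<^sup>*(C)\<close>; its components are the gate classes.\<close>

abbreviation "E\<^sub>C \<equiv> E - {e \<in> E. e \<subseteq> C}"

lemma gate_constant_on_walk:
  assumes w: "walk_betw V E\<^sub>C u xs v"
  shows "gate u = gate v"
proof -
  have "gate (xs ! i) = gate (xs ! 0)" if "i < length xs" for i
    using that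
  proof (induction i)
    case (Suc i)
    then have "{xs ! i, xs ! Suc i} \<in> E\<^sub>C" using w unfolding walk_betw_def walk_in_def by blast
    then have "gate (xs ! i) = gate (xs ! Suc i)" using gate_edge by auto
    then show ?case using Suc by simp
  qed simp
  from this[of "length xs - 1"] show ?thesis
    using w walk_betw_nonempty[OF w] by (simp add: walk_betw_def hd_conv_nth last_conv_nth)
qed

lemma walk_betw_E_C:
  assumes "walk_betw V E u xs w" "\<And>i. Suc i < length xs \<Longrightarrow> \<not> (xs ! i \<in> C \<and> xs ! Suc i \<in> C)"
  shows "walk_betw V E\<^sub>C u xs w"
  using assms by (auto intro!: walk_betw_mono_edges simp: walk_betw_def walk_in_def)

lemma reachable_gate: assumes v: "v \<in> V" shows "reachable V E\<^sub>C v (gate v)"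
proof -
  obtain g where g: "geodesic v g (gate v)" using geodesic_exists v gate_in_V by blast
  have "\<not> (g ! i \<in> C \<and> g ! Suc i \<in> C)" if "Suc i < length g" for i
    using center_dist_le[of "g ! i" v] dist_geodesic_nth[OF g, of i] that geodesic_length[OF g]
      gate(2)[of v] by auto
  then show ?thesis using walk_betw_E_C[OF geodesic_walk[OF g]] by (auto simp: reachable_def)
qed

lemma reachable_iff_gate_eq:
  assumes "u \<in> V" "w \<in> V" shows "reachable V E\<^sub>C u w \<longleftrightarrow> gate u = gate w"
proof
  assume "reachable V E\<^sub>C u w"
  then show "gate u = gate w" using gate_constant_on_walk by (auto simp: reachable_def)
next
  assume eq: "gate u = gate w"
  have "reachable V E\<^sub>C (gate u) w" using reachable_sym[OF reachable_gate[OF assms(2)]] eq by simp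
  then show "reachable V E\<^sub>C u w" using reachable_trans[OF reachable_gate[OF assms(1)]] by blast
qed

lemma dist_other_gate:
  assumes u: "u \<in> V" and w: "w \<in> V" and ne: "gate u \<noteq> gate w"
  shows "d u w = center_dist u + 1 + center_dist w"
proof (rule antisym)
  have "d u w \<le> d u (gate u) + d (gate u) (gate w) + d (gate w) w"
    using dist_triangle[OF u w gate_in_V, of u] dist_triangle[OF gate_in_V w gate_in_V, of u w] by simp
  then show "d u w \<le> center_dist u + 1 + center_dist w"
    using gate(2)[of u] gate(2)[of w] dist_edge[OF center_adjacent[OF gate(1) gate(1) ne]]
      dist_commute[OF w gate_in_V, of w] by simp
next
  obtain g where g: "geodesic u g w" using geodesic_exists u w by blast
  have "\<exists>i. Suc i < length g \<and> g ! i \<in> C \<and> g ! Suc i \<in> C"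
    using walk_betw_E_C[OF geodesic_walk[OF g]] gate_constant_on_walk ne by blast
  then obtain i where i: "i < d u w" "g ! i \<in> C" "g ! Suc i \<in> C"
    using geodesic_length[OF g] by auto
  have "center_dist u \<le> i" using center_dist_le[OF i(2), of u] dist_geodesic_nth[OF g, of i] i(1) by simp
  moreover have "center_dist w \<le> d u w - Suc i"
    using center_dist_le[OF i(3), of w] dist_geodesic_nth_last[OF g, of "Suc i"] i(1)
      dist_commute[OF w] geodesic_nth_in[OF g, of "Suc i"] by simp
  ultimately show "center_dist u + 1 + center_dist w \<le> d u w" using i(1) by simp
qed

lemma closer_on_geodesic_to_gate:
  assumes g: "geodesic x g (gate x)" and z: "z \<in> set g" "z \<noteq> x"
  shows "gate z = gate x" "center_dist z < center_dist x"
proof -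
  obtain p where p: "p \<le> d x (gate x)" "g ! p = z"
    using z(1) geodesic_length[OF g] by (auto simp: in_set_conv_nth less_Suc_eq_le)
  have "p \<noteq> 0" using p z(2) geodesic_first[OF g] by (cases "p = 0") auto
  have x: "x \<in> V" and "z \<in> V" using geodesic_ends_in[OF g] geodesic_nth_in[OF g p(1)] p(2) by auto
  have dist: "d x z = p" "d z (gate x) = d x (gate x) - p"
    using dist_geodesic_nth[OF g p(1)] dist_geodesic_nth_last[OF g p(1)] p(2) by auto
  then show "gate z = gate x" using gate_along_geodesic(1)[OF x \<open>z \<in> V\<close>] p(1) by simp
  show "center_dist z < center_dist x"
    using gate_along_geodesic(2)[OF x \<open>z \<in> V\<close>] dist p(1) \<open>p \<noteq> 0\<close> gate(2)[of x] by simp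
qed

text \<open>As in the even case, with the central clique in the role of \<open>c\<close> and the gates in the role
  of the branches.\<close>

definition color :: "('a \<Rightarrow> nat) \<Rightarrow> 'a \<Rightarrow> nat" where
  "color h v = transpose (r - 1) (h (gate v)) (center_dist v)"

lemma color_le: "(\<And>a. h a \<le> r - 1) \<Longrightarrow> v \<in> V \<Longrightarrow> color h v \<le> r - 1"
  using center_dist_le_rad by (auto simp: color_def transpose_def)

lemma color_radial: "center_dist v = r - 1 \<Longrightarrow> color h v = h (gate v)"
  by (simp add: color_def)

lemma color_ne_same_gate:
  "gate z = gate u \<Longrightarrow> center_dist z \<noteq> center_dist u \<Longrightarrow> color h z \<noteq> color h u"
  using transpose_eq_imp_eq by (fastforce simp: color_def)

lemma gate_on_geodesic_same_gate:
  assumes g: "geodesic u g w" and same: "gate u = gate w" "center_dist u = center_dist w"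
    and z: "z \<in> set g"
  shows "gate z = gate u"
proof (rule ccontr)
  assume "gate z \<noteq> gate u"
  obtain p where p: "p \<le> d u w" "g ! p = z"
    using z geodesic_length[OF g] by (auto simp: in_set_conv_nth less_Suc_eq_le)
  have V: "u \<in> V" "w \<in> V" "z \<in> V" using geodesic_ends_in[OF g] geodesic_set[OF g] z by auto
  have "d u z + d z w = d u w"
    using dist_geodesic_nth[OF g p(1)] dist_geodesic_nth_last[OF g p(1)] p by simp
  moreover have "d u z = center_dist u + 1 + center_dist z" "d z w = center_dist z + 1 + center_dist w"
    using dist_other_gate[OF V(1,3)] dist_other_gate[OF V(3,2)] \<open>gate z \<noteq> gate u\<close> same(1) by auto
  moreover have "d u w \<le> d u (gate u) + d (gate u) w" using dist_triangle[OF V(1,2) gate_in_V] .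
  ultimately show False
    using gate(2)[of u] gate(2)[of w] same dist_commute[OF V(2) gate_in_V, of w] by simp
qed

lemma visible_same_gate:
  assumes u: "u \<in> V" and w: "w \<in> V" "w \<noteq> u" and same: "gate u = gate w"
    and color_eq: "color h u = color h w"
  shows "\<exists>xs. geodesic u xs w \<and> (\<forall>z\<in>internal xs. color h z \<noteq> color h u) \<and> length xs \<le> D"
proof -
  define a m where "a = gate u" and "m = center_dist u"
  have level: "center_dist w = m"
    unfolding m_def by (rule ccontr) (use color_ne_same_gate[OF same[symmetric], of h] color_eq in auto)
  have "m \<noteq> 0"
    using center_dist_eq_0_iff[OF u] center_dist_eq_0_iff[OF w(1)] gate_center same w(2) level
    unfolding m_def by auto
  have dist_a: "d u a = m" "d a w = m"
    using gate(2)[of u] gate(2)[of w] same level dist_commute[OF w(1) gate_in_V]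
    unfolding a_def m_def by auto
  obtain g where g: "geodesic u g w" using geodesic_exists u w by blast
  have short: "d u w \<le> 2 * m"
    using dist_triangle[OF u w(1) gate_in_V, of u] dist_a unfolding a_def by simp
  have "color h z \<noteq> color h u" if z: "z \<in> internal g" for z
  proof -
    obtain p where p: "0 < p" "p < d u w" "g ! p = z"
      using z geodesic_length[OF g] unfolding in_internal_iff by auto
    have "gate z = a"
      using gate_on_geodesic_same_gate[OF g same] level internal_geodesic(1)[OF g z]
      unfolding a_def m_def by simp
    have "z \<in> V" using geodesic_nth_in[OF g, of p] p by simp
    have "center_dist z \<le> d a z"
      using center_dist_le[OF gate(1), of z u] dist_commute[OF \<open>z \<in> V\<close> gate_in_V, of u]
      unfolding a_def by simp
    also have "\<dots> \<le> max (d a u - p) (d a w - (d u w - p))"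
      using dist_along_geodesic[OF g gate_in_V, of p] p unfolding a_def by simp
    also have "\<dots> < m"
      using dist_a dist_commute[OF u gate_in_V] p \<open>m \<noteq> 0\<close> unfolding a_def by auto
    finally show ?thesis using color_ne_same_gate \<open>gate z = a\<close> unfolding a_def m_def by simp
  qed
  moreover have "length g \<le> D"
    using geodesic_length[OF g] short center_dist_le_rad[OF u] diam_eq unfolding m_def by simp
  ultimately show ?thesis using g by blast
qed

lemma visible_other_gate:
  assumes u: "u \<in> V" and w: "w \<in> V" and other: "gate u \<noteq> gate w"
    and color_eq: "color h u = color h w"
  shows "\<exists>xs. geodesic u xs w \<and> (\<forall>z\<in>internal xs. color h z \<noteq> color h u) \<and>
    length xs = center_dist u + center_dist w + 2"
proof -
  obtain g1 g2 where g1: "geodesic u g1 (gate u)" and g2: "geodesic w g2 (gate w)"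
    using geodesic_exists u w gate_in_V by metis
  have "rev g2 = gate w # tl (rev g2)"
    using geodesic_first[OF geodesic_rev[OF g2]] geodesic_length[OF g2] by (cases "rev g2") auto
  then have "walk_betw V E u (g1 @ tl ([gate u, gate w] @ tl (rev g2))) w"
    using walk_betw_append[OF geodesic_walk[OF g1] walk_betw_append[OF
        walk_betw_edge[OF center_adjacent[OF gate(1) gate(1) other] gate_in_V gate_in_V]
        geodesic_walk[OF geodesic_rev[OF g2]]]] by simp
  moreover have "length (g1 @ rev g2) = center_dist u + center_dist w + 2"
    using geodesic_length[OF g1] geodesic_length[OF g2] gate(2) by simp
  ultimately have xs: "geodesic u (g1 @ rev g2) w"
    using dist_other_gate[OF u w other] \<open>rev g2 = gate w # tl (rev g2)\<close>
    by (simp add: shortest_path_def)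
  have "color h z \<noteq> color h u" if z: "z \<in> internal (g1 @ rev g2)" for z
  proof -
    have "z \<in> set g1 \<or> z \<in> set g2" "z \<noteq> u" "z \<noteq> w" using internal_geodesic[OF xs z] by auto
    then show ?thesis
      using closer_on_geodesic_to_gate[OF g1, of z] closer_on_geodesic_to_gate[OF g2, of z]
        color_ne_same_gate color_eq by fastforce
  qed
  then show ?thesis using xs \<open>length (g1 @ rev g2) = _\<close> by blast
qed

lemma visible:
  assumes u: "u \<in> V" and w: "w \<in> V" and color_eq: "color h u = color h w"
  shows "\<exists>xs. geodesic u xs w \<and> (\<forall>z\<in>internal xs. color h z \<noteq> color h u) \<and>
    (length xs \<le> D \<or> center_dist u = r - 1 \<and> center_dist w = r - 1 \<and> gate u \<noteq> gate w)"
proof -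
  consider "u = w" | "u \<noteq> w" "gate u = gate w" | "gate u \<noteq> gate w" by blast
  then show ?thesis
  proof cases
    case 1
    moreover have "1 \<le> D" using diam_eq by presburger
    ultimately show ?thesis using geodesic_singleton[OF u] by (auto simp: internal_def)
  next
    case 2
    then show ?thesis using visible_same_gate[OF u w _ _ color_eq] by blast
  next
    case 3
    then obtain xs where "geodesic u xs w" "\<forall>z\<in>internal xs. color h z \<noteq> color h u"
      "length xs = center_dist u + center_dist w + 2"
      using visible_other_gate[OF u w _ color_eq] by blast
    moreover have "center_dist u \<le> r - 1" "center_dist w \<le> r - 1" using center_dist_le_rad u w by auto
    ultimately show ?thesis using 3 diam_eq by (intro exI[of _ xs]) auto
  qed
qed

lemma radial_iff: "radial V E u \<longleftrightarrow> u \<in> V \<and> center_dist u = r - 1"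
proof
  assume "radial V E u"
  then obtain x where x: "u \<in> V" "x \<in> C" "d u x = r" unfolding radial_def by blast
  show "u \<in> V \<and> center_dist u = r - 1"
  proof (cases "x = gate u")
    case True
    then show ?thesis using x gate(2) center_dist_le_rad[OF x(1)] rad_pos by simp
  next
    case False
    then show ?thesis using dist_other_center[OF x(1,2)] x by simp
  qed
next
  assume u: "u \<in> V \<and> center_dist u = r - 1"
  obtain c1 c2 where "c1 \<in> C" "c2 \<in> C" "{c1, c2} \<in> E" using center_if_odd[OF diam_eq] by blast
  then obtain x where "x \<in> C" "x \<noteq> gate u" using edge_ends(1) by metis
  then show "radial V E u"
    using dist_other_center[of u x] u rad_pos unfolding radial_def by fastforce
qed

lemma deg_star_center_eq: "deg_star_center V E = card (gate ` {u \<in> V. center_dist u = r - 1})"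
proof -
  let ?R = "{u \<in> V. center_dist u = r - 1}"
  have "component_of V E\<^sub>C u = {w \<in> V. gate w = gate u}" if "u \<in> V" for u
    using reachable_iff_gate_eq[OF that] by (auto simp: component_of_def)
  then have components: "component_of V E\<^sub>C ` ?R = (\<lambda>a. {w \<in> V. gate w = a}) ` gate ` ?R"
    unfolding image_image by (intro image_cong) auto
  have "deg_star_center V E = card (component_of V E\<^sub>C ` ?R)"
    using components_meeting[of V "E\<^sub>C" "radial V E"] two_le_card_center
    by (simp add: deg_star_center_def radial_iff Let_def)
  also have "\<dots> = card (gate ` ?R)"
    unfolding components
  proof (rule card_image, rule inj_onI)
    fix a b assume "a \<in> gate ` ?R" "b \<in> gate ` ?R" "{w \<in> V. gate w = a} = {w \<in> V. gate w = b}"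
    then show "a = b" using gate_center[of a] gate_center[of b] gate(1) center_subset by blast
  qed
  finally show ?thesis .
qed

lemma chi_mu_le: "chi_mu V E \<le> r"
proof -
  have "chi_mu_k D V E \<le> r"
  proof (rule chi_mu_k_le_coloring[where \<kappa> = "color (\<lambda>_. r - 1)"])
    fix v assume "v \<in> V"
    then show "color (\<lambda>_. r - 1) v < r" using color_le[of "\<lambda>_. r - 1"] rad_pos by fastforce
  next
    fix u w assume uw: "u \<in> V" "w \<in> V" "color (\<lambda>_. r - 1) u = color (\<lambda>_. r - 1) w"
    then obtain xs where "geodesic u xs w"
      "\<forall>z\<in>internal xs. color (\<lambda>_. r - 1) z \<noteq> color (\<lambda>_. r - 1) u"
      using visible by blast
    then show "\<exists>xs. geodesic u xs w \<and>
        (\<forall>z\<in>internal xs. color (\<lambda>_. r - 1) z \<noteq> color (\<lambda>_. r - 1) u) \<and> length xs \<le> Suc D"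
      using geodesic_length dist_le_diam uw by fastforce
  qed
  then show ?thesis using chi_mu_le_chi_mu_k[of D] by simp
qed

lemma chi_mu_k_le:
  assumes few: "card (gate ` {u \<in> V. center_dist u = r - 1}) \<le> r"
  shows "chi_mu_k (D - 1) V E \<le> r"
proof -
  let ?G = "gate ` {u \<in> V. center_dist u = r - 1}"
  have "finite ?G" "card ?G \<le> Suc (r - 1)" using finite_V few rad_pos by auto
  then obtain h where h: "inj_on h ?G" "\<And>a. h a \<le> r - 1" "\<And>a. a \<notin> ?G \<Longrightarrow> h a = r - 1"
    by (rule finite_injective_labelling) blast
  show ?thesis
  proof (rule chi_mu_k_le_coloring[where \<kappa> = "color h"])
    fix v assume "v \<in> V"
    then show "color h v < r" using color_le[of h] h(2) rad_pos by fastforce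
  next
    fix u w assume uw: "u \<in> V" "w \<in> V" and color_eq: "color h u = color h w"
    then obtain xs where xs: "geodesic u xs w" "\<forall>z\<in>internal xs. color h z \<noteq> color h u"
      "length xs \<le> D \<or> center_dist u = r - 1 \<and> center_dist w = r - 1 \<and> gate u \<noteq> gate w"
      using visible by blast
    have "\<not> (center_dist u = r - 1 \<and> center_dist w = r - 1 \<and> gate u \<noteq> gate w)"
      using color_eq color_radial inj_onD[OF h(1), of "gate u" "gate w"] uw by auto
    then show "\<exists>xs. geodesic u xs w \<and> (\<forall>z\<in>internal xs. color h z \<noteq> color h u) \<and>
        length xs \<le> Suc (D - 1)"
      using xs by (intro exI[of _ xs]) auto
  qed
qed

text \<open>Radial vertices with different gates are at distance \<open>2 (r - 1) + 1 = D\<close>.\<close>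

lemma card_gates_le_chi_mu_k: "card (gate ` {u \<in> V. center_dist u = r - 1}) \<le> chi_mu_k (D - 1) V E"
proof (rule card_image_le_chi_mu_k)
  fix u w assume "u \<in> {u \<in> V. center_dist u = r - 1}" "w \<in> {u \<in> V. center_dist u = r - 1}"
    "gate u \<noteq> gate w"
  then show "D - 1 < d u w" using dist_other_gate diam_eq rad_pos by auto
qed auto

end

context connected_block_graph
begin

lemma chi_mu_k_eq_chi_mu_iff:
  assumes "2 \<le> D"
  shows "chi_mu_k (D - 1) V E = chi_mu V E \<longleftrightarrow> deg_star_center V E \<le> (D + 2) div 2"
proof -
  let ?b = "(D + 2) div 2"
  have "chi_mu V E \<le> ?b \<and> (deg_star_center V E \<le> ?b \<longrightarrow> chi_mu_k (D - 1) V E \<le> ?b) \<and>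
      deg_star_center V E \<le> chi_mu_k (D - 1) V E"
  proof (cases "D = 2 * r")
    case True
    obtain c where "C = {c}" using center_singleton_if_even[OF True] by blast
    then interpret block_graph_even_diam V E c using True assms by unfold_locales auto
    show ?thesis
      using chi_mu_le chi_mu_k_le card_branches_le_chi_mu_k True by (simp add: deg_star_center_eq)
  next
    case False
    then have "D + 1 = 2 * r" using diam_le_twice_rad twice_rad_le_Suc_diam by linarith
    then interpret block_graph_odd_diam V E by unfold_locales
    show ?thesis
      using chi_mu_le chi_mu_k_le card_gates_le_chi_mu_k \<open>D + 1 = 2 * r\<close>
      by (simp add: deg_star_center_eq)
  qed
  moreover have "?b \<le> chi_mu V E" using diam_le_chi_mu by linarith
  moreover have "chi_mu V E \<le> chi_mu_k (D - 1) V E" by (rule chi_mu_le_chi_mu_k)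
  ultimately show ?thesis by (cases "deg_star_center V E \<le> ?b") auto
qed

end

lemma ceiling_half_Suc: "real_of_int \<lceil>(real n + 1) / 2\<rceil> = real ((n + 2) div 2)"
proof -
  have "real (n + 1) \<le> real (2 * ((n + 2) div 2))" "real (2 * ((n + 2) div 2)) \<le> real (n + 2)"
    by (simp_all only: of_nat_le_iff)
  then have "\<lceil>(real n + 1) / 2\<rceil> = int ((n + 2) div 2)" by (intro ceiling_unique) auto
  then show ?thesis by simp
qed

theorem theorem7p1:
  fixes V :: "'a set" and E :: "'a set set"
  assumes "connected_graph V E"
    and "block_graph V E"
    and "diam V E \<ge> 2"
  shows "chi_mu_k (diam V E - 1) V E = chi_mu V E \<longleftrightarrow>
         real (deg_star_center V E) \<le> real_of_int (ceiling ((real (diam V E) + 1) / 2))"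
proof -
  interpret connected_block_graph V E using assms(1,2) by unfold_locales
  show ?thesis unfolding ceiling_half_Suc of_nat_le_iff using chi_mu_k_eq_chi_mu_iff[OF assms(3)] .
qed

end
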